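(* Let $X$ be a Dedekind complete Riesz space with weak order unit $e$ and conditional expectation operator $T$ with $Te=e$, and assume $X$ is $T$-universally complete. Let $(P_{n})$ be a sequence of $T$-independent band projections in $X$. If $B$ is a band of $X^{u}$ such that $$\sum_{n\ge1}TP_{n}e=\infty_{B}+u\quad\text{with }u\in B^{d}\ (u\in X^u),$$ then the band projection $P_{B}$ commutes with $T$ and $P_{B}=\limsup_{n\to\infty}P_{n}$. In particular, if $\sum_{n\ge1}TP_{n}e=\infty$ then $\limsup_{n\to\infty}P_{n}=I$.
   Context: A conditional expectation operator on a Dedekind complete Riesz space $X$ with weak order unit $e$ is a strictly positive, order continuous linear projection $T$ with $Te=e$ whose range $R(T)$ is a Dedekind complete Riesz subspace. $X$ is $T$-universally complete if every increasing net $(x_\alpha)$ in $X$ with $(Tx_\alpha)$ order bounded in $X^u$ is order convergent in $X$. $X^{u}$ is the universal completion of $X$, an $f$-algebra with unit $e$. The sequence $(P_n)$ of band projections is $T$-independent if for all distinct indices $i_1,\dots,i_k$ and $Q_j\in\{P_{i_j},I-P_{i_j}\}$ one has $TQ_1\cdots Q_ke=\prod_{j=1}^{k}TQ_je$ (product in $X^{u}$). $\limsup_n P_n=\inf_n\sup_{k\ge n}P_k$ in the Boolean algebra of band projections. The sup-completion $X^{s}$ of $X$ is the lattice-ordered cone of classes of nonempty upward directed subsets of $X$ (with $A\sim B$ iff $\sup_{a\in A}(x\wedge a)=\sup_{b\in B}(x\wedge b)$ for all $x\in X$), containing $X$ and $X^u_+$, in which every nonempty set has a supremum; it has a greatest element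 $\infty$. Series of positive terms are interpreted as suprema of partial sums in $X^{s}$. For a band $B$, $\infty_B$ is the supremum of $B$ in $X^s$. Bands of $X$ and of $X^u$ are identified. *)

theory Defs
  imports Complex_Main "HOL-Library.Lattice_Algebras"
begin

text \<open>The ambient type 'u models the universal completion X^u of X.
  X itself is modelled as a subset of 'u (an order dense ideal).\<close>

class dc_riesz_space = ordered_real_vector + lattice_ab_group_add + conditionally_complete_lattice

definition rabs :: "'u::dc_riesz_space \<Rightarrow> 'u" where
  "rabs x = sup x (- x)"

definition disj :: "'u::dc_riesz_space \<Rightarrow> 'u \<Rightarrow> bool" where
  "disj x y \<longleftrightarrow> inf (rabs x) (rabs y) = 0"

definition dcompl :: "'u::dc_riesz_space set \<Rightarrow> 'u set" where
  "dcompl S = {x. \<forall>y\<in>S. disj x y}"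

definition is_ideal_in :: "'u::dc_riesz_space set \<Rightarrow> 'u set \<Rightarrow> bool" where
  "is_ideal_in V I \<longleftrightarrow> I \<subseteq> V \<and> 0 \<in> I \<and> (\<forall>x\<in>I. \<forall>y\<in>I. x + y \<in> I)
     \<and> (\<forall>c x. x \<in> I \<longrightarrow> c *\<^sub>R x \<in> I)
     \<and> (\<forall>x\<in>I. \<forall>y\<in>V. rabs y \<le> rabs x \<longrightarrow> y \<in> I)"

definition is_band :: "'u::dc_riesz_space set \<Rightarrow> bool" where
  "is_band B \<longleftrightarrow> is_ideal_in UNIV B \<and> (\<forall>A. A \<subseteq> B \<and> A \<noteq> {} \<and> bdd_above A \<longrightarrow> Sup A \<in> B)"

definition is_bp_onto :: "('u::dc_riesz_space \<Rightarrow> 'u) \<Rightarrow> 'u set \<Rightarrow> bool" where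
  "is_bp_onto P B \<longleftrightarrow> (\<forall>x. P x \<in> B \<and> x - P x \<in> dcompl B)"

definition band_proj :: "('u::dc_riesz_space \<Rightarrow> 'u) \<Rightarrow> bool" where
  "band_proj P \<longleftrightarrow> (\<exists>B. is_band B \<and> is_bp_onto P B)"

definition bproj :: "'u::dc_riesz_space set \<Rightarrow> ('u \<Rightarrow> 'u)" where
  "bproj B = (THE P. is_bp_onto P B)"

definition bp_le :: "('u::dc_riesz_space \<Rightarrow> 'u) \<Rightarrow> ('u \<Rightarrow> 'u) \<Rightarrow> bool" where
  "bp_le P Q \<longleftrightarrow> (\<forall>x. P (Q x) = P x)"

definition bp_Sup :: "('u::dc_riesz_space \<Rightarrow> 'u) set \<Rightarrow> ('u \<Rightarrow> 'u)" where
  "bp_Sup F = (THE Q. band_proj Q \<and> (\<forall>P\<in>F. bp_le P Q)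
      \<and> (\<forall>R. band_proj R \<and> (\<forall>P\<in>F. bp_le P R) \<longrightarrow> bp_le Q R))"

definition bp_Inf :: "('u::dc_riesz_space \<Rightarrow> 'u) set \<Rightarrow> ('u \<Rightarrow> 'u)" where
  "bp_Inf F = (THE Q. band_proj Q \<and> (\<forall>P\<in>F. bp_le Q P)
      \<and> (\<forall>R. band_proj R \<and> (\<forall>P\<in>F. bp_le R P) \<longrightarrow> bp_le R Q))"

definition bp_limsup :: "(nat \<Rightarrow> 'u::dc_riesz_space \<Rightarrow> 'u) \<Rightarrow> ('u \<Rightarrow> 'u)" where
  "bp_limsup P = bp_Inf (range (\<lambda>n. bp_Sup {P k | k. n \<le> k}))"

text \<open>Universal completeness of 'u: Dedekind complete (type class) and laterally complete.\<close>
definition laterally_complete :: "'u::dc_riesz_space itself \<Rightarrow> bool" where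
  "laterally_complete _ \<longleftrightarrow> (\<forall>D::'u set. (\<forall>x\<in>D. 0 \<le> x)
      \<and> (\<forall>x\<in>D. \<forall>y\<in>D. x \<noteq> y \<longrightarrow> inf x y = 0) \<longrightarrow> bdd_above D)"

definition is_universal_completion_of :: "'u::dc_riesz_space set \<Rightarrow> bool" where
  "is_universal_completion_of X \<longleftrightarrow> laterally_complete TYPE('u) \<and> is_ideal_in UNIV X
      \<and> (\<forall>v. 0 < v \<longrightarrow> (\<exists>x\<in>X. 0 < x \<and> x \<le> v))"

definition weak_order_unit :: "'u::dc_riesz_space set \<Rightarrow> 'u \<Rightarrow> bool" where
  "weak_order_unit X e \<longleftrightarrow> e \<in> X \<and> 0 \<le> e \<and> (\<forall>x\<in>X. inf (rabs x) e = 0 \<longrightarrow> x = 0)"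

definition f_algebra_unit :: "('u::dc_riesz_space \<Rightarrow> 'u \<Rightarrow> 'u) \<Rightarrow> 'u \<Rightarrow> bool" where
  "f_algebra_unit mult e \<longleftrightarrow>
     (\<forall>x y z. mult x (y + z) = mult x y + mult x z \<and> mult (x + y) z = mult x z + mult y z)
   \<and> (\<forall>c x y. mult (c *\<^sub>R x) y = c *\<^sub>R mult x y \<and> mult x (c *\<^sub>R y) = c *\<^sub>R mult x y)
   \<and> (\<forall>x y z. mult (mult x y) z = mult x (mult y z))
   \<and> (\<forall>x y. 0 \<le> x \<and> 0 \<le> y \<longrightarrow> 0 \<le> mult x y)
   \<and> (\<forall>x y z. inf x y = 0 \<and> 0 \<le> z \<longrightarrow> inf (mult z x) y = 0 \<and> inf (mult x z) y = 0)
   \<and> (\<forall>x. mult e x = x \<and> mult x e = x)"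

definition cond_exp :: "'u::dc_riesz_space set \<Rightarrow> ('u \<Rightarrow> 'u) \<Rightarrow> 'u \<Rightarrow> bool" where
  "cond_exp X T e \<longleftrightarrow>
     (\<forall>x\<in>X. T x \<in> X)
   \<and> (\<forall>x\<in>X. \<forall>y\<in>X. T (x + y) = T x + T y)
   \<and> (\<forall>c. \<forall>x\<in>X. T (c *\<^sub>R x) = c *\<^sub>R T x)
   \<and> (\<forall>x\<in>X. 0 \<le> x \<longrightarrow> 0 \<le> T x)
   \<and> (\<forall>x\<in>X. 0 < x \<longrightarrow> 0 < T x)
   \<and> (\<forall>D. D \<subseteq> X \<and> D \<noteq> {} \<and> (\<forall>x\<in>D. \<forall>y\<in>D. \<exists>z\<in>D. z \<le> x \<and> z \<le> y)
        \<and> (\<forall>x\<in>D. 0 \<le> x) \<and> Inf D = 0 \<longrightarrow> Inf (T ` D) = 0)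
   \<and> (\<forall>x\<in>X. T (T x) = T x)
   \<and> T e = e
   \<and> (\<forall>x\<in>T ` X. \<forall>y\<in>T ` X. sup x y \<in> T ` X)
   \<and> (\<forall>A. A \<subseteq> T ` X \<and> A \<noteq> {} \<and> (\<exists>b\<in>T ` X. \<forall>a\<in>A. a \<le> b) \<longrightarrow>
        (\<exists>s\<in>T ` X. (\<forall>a\<in>A. a \<le> s) \<and> (\<forall>b\<in>T ` X. (\<forall>a\<in>A. a \<le> b) \<longrightarrow> s \<le> b)))"

text \<open>X is T-universally complete.  An increasing net is represented by its range,
  an upward directed subset D of X; order convergence of an increasing net in X
  means existence of its supremum in X.\<close>
definition T_univ_complete :: "'u::dc_riesz_space set \<Rightarrow> ('u \<Rightarrow> 'u) \<Rightarrow> bool" where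
  "T_univ_complete X T \<longleftrightarrow>
     (\<forall>D. D \<subseteq> X \<and> D \<noteq> {} \<and> (\<forall>x\<in>D. \<forall>y\<in>D. \<exists>z\<in>D. x \<le> z \<and> y \<le> z)
        \<and> (\<exists>l w. \<forall>d\<in>D. l \<le> T d \<and> T d \<le> w) \<longrightarrow>
        (\<exists>s\<in>X. (\<forall>d\<in>D. d \<le> s) \<and> (\<forall>t\<in>X. (\<forall>d\<in>D. d \<le> t) \<longrightarrow> s \<le> t)))"

definition T_indep :: "('u::dc_riesz_space \<Rightarrow> 'u) \<Rightarrow> ('u \<Rightarrow> 'u \<Rightarrow> 'u) \<Rightarrow> 'u \<Rightarrow> (nat \<Rightarrow> 'u \<Rightarrow> 'u) \<Rightarrow> bool" where
  "T_indep T mult e P \<longleftrightarrow>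
     (\<forall>is c. distinct is \<and> is \<noteq> [] \<longrightarrow>
        (let Q = (\<lambda>i. if c i then P i else (\<lambda>x. x - P i x)) in
          T (foldr (\<lambda>i f. Q i \<circ> f) is id e) = foldr (\<lambda>i a. mult (T (Q i e)) a) is e))"

text \<open>Equivalence of (nonempty, upward directed) subsets of X defining equality in the
  sup-completion X^s.\<close>
definition sc_equiv :: "'u::dc_riesz_space set \<Rightarrow> 'u set \<Rightarrow> 'u set \<Rightarrow> bool" where
  "sc_equiv X A C \<longleftrightarrow> (\<forall>x\<in>X. Sup ((\<lambda>a. inf x a) ` A) = Sup ((\<lambda>c. inf x c) ` C))"

text \<open>Representatives in X^s: the series (sup of partial sums), the element
  \<infinity>_B + u (B band, u in X^u_+), and \<infinity>.\<close>
definition series_rep :: "(nat \<Rightarrow> 'u::dc_riesz_space) \<Rightarrow> 'u set" where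
  "series_rep f = range (\<lambda>N. \<Sum>n<N. f n)"

definition inftyB_plus_rep :: "'u::dc_riesz_space set \<Rightarrow> 'u set \<Rightarrow> 'u \<Rightarrow> 'u set" where
  "inftyB_plus_rep X B u = {b + y | b y. b \<in> X \<inter> B \<and> 0 \<le> b \<and> y \<in> X \<and> 0 \<le> y \<and> y \<le> u}"

definition infty_rep :: "'u::dc_riesz_space set \<Rightarrow> 'u set" where
  "infty_rep X = {x \<in> X. 0 \<le> x}"

end

theory Submission
  imports Defs
begin

text \<open>
  Write \<open>S\<^sub>N = \<Sum>k<N. T P\<^sub>k e\<close>.  Comparing the truncations \<open>c e \<sqinter> S\<^sub>N\<close> with \<open>\<infinity>\<^sub>B + u\<close>
  shows that for every \<open>c\<close> the element \<open>c T P\<^sub>B e\<close> lies below a \<open>T\<close>-fixed element whose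
  \<open>B\<^sup>d\<close>-component is at most \<open>u\<close>; hence \<open>T P\<^sub>B e \<in> B\<close>, so \<open>T P\<^sub>B e = P\<^sub>B e\<close>, and this
  makes \<open>P\<^sub>B\<close> commute with \<open>T\<close>.

  For the limit superior let \<open>G\<^sub>n\<close> be the band generated by the \<open>P\<^sub>k\<close>, \<open>k \<ge> n\<close>.  If
  \<open>0 \<le> w \<le> e\<close> lies in \<open>B\<close> and is disjoint from \<open>G\<^sub>n\<close>, \<open>T\<close>-independence gives
  \<open>T w \<le> \<Prod>\<^bsub>n\<le>k<N\<^esub> (e - T P\<^sub>k e)\<close>, and \<open>\<Prod> (e - t\<^sub>k) (e + \<Sum> t\<^sub>k) \<le> e\<close> shows that \<open>T w\<close>
  acts boundedly on the partial sums, which diverge on \<open>B\<close>; so \<open>w = 0\<close> and \<open>B \<subseteq> G\<^sub>n\<close>.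
  Conversely, if \<open>v\<close> lies in every \<open>G\<^sub>n\<close> and in \<open>B\<^sup>d\<close>, then \<open>T v\<close> is bounded by the
  \<open>B\<^sup>d\<close>-part of the tails \<open>\<Sum>\<^bsub>k\<ge>n\<^esub> T P\<^sub>k e\<close>, which tend to zero because the \<open>B\<^sup>d\<close>-part
  of the series is bounded by \<open>u\<close>; so \<open>v = 0\<close>.  Thus \<open>\<Inter> G\<^sub>n = B\<close>.
\<close>

section \<open>Lattice-ordered vector spaces\<close>

lemma rabs_nonneg: "0 \<le> rabs (x::'u::dc_riesz_space)"
proof -
  have "x + - x \<le> sup x (- x) + sup x (- x)" by (intro add_mono) auto
  then show ?thesis unfolding rabs_def by simp
qed

lemma rabs_of_nonneg: "0 \<le> (x::'u::dc_riesz_space) \<Longrightarrow> rabs x = x"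
  unfolding rabs_def by (metis neg_le_0_iff_le order_trans sup.absorb1)

lemma rabs_eq_0_iff: "rabs (x::'u::dc_riesz_space) = 0 \<longleftrightarrow> x = 0"
  unfolding rabs_def by simp

lemma rabs_minus: "rabs (- (x::'u::dc_riesz_space)) = rabs x"
  unfolding rabs_def by (simp add: sup.commute)

lemma rabs_le_iff: "rabs (x::'u::dc_riesz_space) \<le> a \<longleftrightarrow> x \<le> a \<and> - x \<le> a"
  unfolding rabs_def by simp

lemma le_rabs: "(x::'u::dc_riesz_space) \<le> rabs x" "- x \<le> rabs x"
  using rabs_le_iff[of x "rabs x"] by auto

lemma rabs_triangle: "rabs ((x::'u::dc_riesz_space) + y) \<le> rabs x + rabs y"
  using add_mono[OF le_rabs(1)[of x] le_rabs(1)[of y]] add_mono[OF le_rabs(2)[of x] le_rabs(2)[of y]]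
  unfolding rabs_le_iff by (simp add: add.commute)

lemma rabs_pprt_le: "rabs (pprt x) \<le> rabs (x::'u::dc_riesz_space)"
  unfolding pprt_def rabs_of_nonneg[OF sup.cobounded2]
  using le_rabs rabs_nonneg by (auto intro: sup_least)

lemma rabs_nprt_le: "rabs (nprt x) \<le> rabs (x::'u::dc_riesz_space)"
  using rabs_pprt_le[of "- x"] by (simp add: pprt_neg rabs_minus)

lemma inf_add_le:
  fixes a b c :: "'u::dc_riesz_space"
  assumes "0 \<le> a" "0 \<le> b" "0 \<le> c"
  shows "inf (a + b) c \<le> inf a c + inf b c"
proof -
  have "inf a c + inf b c = inf (inf (a + b) (a + c)) (inf (c + b) (c + c))"
    by (simp add: add_inf_distrib_left add_inf_distrib_right inf_assoc inf.left_commute)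
  moreover have "inf (a + b) c \<le> inf (inf (a + b) (a + c)) (inf (c + b) (c + c))"
    using assms by (auto intro: le_infI2 add_increasing add_increasing2)
  ultimately show ?thesis by simp
qed

lemma scaleR_inf_pos:
  fixes a b :: "'u::dc_riesz_space"
  assumes c: "0 < c"
  shows "c *\<^sub>R inf a b = inf (c *\<^sub>R a) (c *\<^sub>R b)"
proof (rule antisym)
  show "c *\<^sub>R inf a b \<le> inf (c *\<^sub>R a) (c *\<^sub>R b)"
    using c by (auto intro: scaleR_left_mono)
  define z where "z = inf (c *\<^sub>R a) (c *\<^sub>R b)"
  have ic: "0 \<le> inverse c" using c by simp
  have "inverse c *\<^sub>R z \<le> inverse c *\<^sub>R (c *\<^sub>R a)"
    using ic unfolding z_def by (intro scaleR_left_mono) auto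
  moreover have "inverse c *\<^sub>R (c *\<^sub>R a) = a" using c by simp
  moreover have "inverse c *\<^sub>R z \<le> inverse c *\<^sub>R (c *\<^sub>R b)"
    using ic unfolding z_def by (intro scaleR_left_mono) auto
  moreover have "inverse c *\<^sub>R (c *\<^sub>R b) = b" using c by simp
  ultimately have "inverse c *\<^sub>R z \<le> inf a b" by simp
  then have "c *\<^sub>R (inverse c *\<^sub>R z) \<le> c *\<^sub>R inf a b"
    using c by (intro scaleR_left_mono) auto
  moreover have "c *\<^sub>R (inverse c *\<^sub>R z) = z" using c by simp
  ultimately show "z \<le> c *\<^sub>R inf a b" by simp
qed

lemma scaleR_sup_pos:
  fixes a b :: "'u::dc_riesz_space"
  assumes "0 < c"
  shows "c *\<^sub>R sup a b = sup (c *\<^sub>R a) (c *\<^sub>R b)"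
proof -
  have "c *\<^sub>R sup a b = - (c *\<^sub>R inf (-a) (-b))"
    by (simp only: sup_eq_neg_inf[of a b] scaleR_minus_right)
  also have "\<dots> = - inf (- (c *\<^sub>R a)) (- (c *\<^sub>R b))"
    using assms by (simp only: scaleR_inf_pos scaleR_minus_right)
  also have "\<dots> = sup (c *\<^sub>R a) (c *\<^sub>R b)"
    by (simp only: neg_inf_eq_sup minus_minus)
  finally show ?thesis .
qed

lemma rabs_scaleR: "rabs (c *\<^sub>R (x::'u::dc_riesz_space)) = \<bar>c\<bar> *\<^sub>R rabs x"
proof (cases "c = 0")
  case True
  then show ?thesis by (simp add: rabs_eq_0_iff)
next
  case False
  show ?thesis
  proof (cases "c > 0")
    case True then show ?thesis unfolding rabs_def by (simp add: scaleR_sup_pos)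
  next
    case False
    then have "-c > 0" using \<open>c \<noteq> 0\<close> by simp
    then have "rabs ((-c) *\<^sub>R (-x)) = (-c) *\<^sub>R rabs (-x)"
      unfolding rabs_def by (simp only: scaleR_sup_pos scaleR_minus_right)
    moreover have "(-c) *\<^sub>R (-x) = c *\<^sub>R x" by simp
    moreover have "\<bar>c\<bar> = - c" using False by simp
    ultimately show ?thesis by (simp add: rabs_minus)
  qed
qed

lemma archimedean_zero:
  fixes g M :: "'u::dc_riesz_space"
  assumes "0 \<le> g" "\<And>n::nat. real n *\<^sub>R g \<le> M"
  shows "g = 0"
proof -
  define S where "S = range (\<lambda>n::nat. real n *\<^sub>R g)"
  have bdd: "bdd_above S" unfolding S_def using assms(2) by (intro bdd_aboveI[of _ M]) auto
  have "real (Suc n) *\<^sub>R g \<le> Sup S" for n :: nat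
    unfolding S_def by (rule cSup_upper[OF rangeI bdd[unfolded S_def]])
  then have "real n *\<^sub>R g \<le> Sup S - g" for n :: nat
    by (simp add: algebra_simps)
  then have "Sup S \<le> Sup S - g" unfolding S_def by (intro cSup_least) auto
  then show ?thesis using assms(1) by simp
qed

lemma inf_Sup_distrib:
  fixes a :: "'u::dc_riesz_space"
  assumes ne: "A \<noteq> {}" and bdd: "bdd_above A"
  shows "inf a (Sup A) = Sup ((\<lambda>x. inf a x) ` A)"
proof (rule antisym)
  define s where "s = Sup ((\<lambda>x. inf a x) ` A)"
  have bdd_inf: "bdd_above ((\<lambda>x. inf a x) ` A)"
    by (rule bdd_aboveI[of _ a]) auto
  \<comment> \<open>Riesz decomposition: \<open>inf a x + sup a x = a + x\<close>.\<close>
  have "x \<le> s + sup a (Sup A) - a" if x: "x \<in> A" for x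
  proof -
    have "inf a x \<le> s" unfolding s_def using x bdd_inf by (intro cSup_upper) auto
    moreover have "sup a x \<le> sup a (Sup A)" using x bdd by (intro sup_mono cSup_upper) auto
    ultimately have "inf a x + sup a x \<le> s + sup a (Sup A)" by (rule add_mono)
    then show ?thesis using add_eq_inf_sup[of a x] by (simp add: algebra_simps)
  qed
  then have "Sup A \<le> s + sup a (Sup A) - a" using ne by (intro cSup_least) auto
  then show "inf a (Sup A) \<le> s"
    using add_eq_inf_sup[of a "Sup A"] by (simp add: algebra_simps)
  show "s \<le> inf a (Sup A)" unfolding s_def
    using ne cSup_upper[OF _ bdd] by (auto intro!: cSup_least intro: le_infI2)
qed

lemma sup_Sup_const:
  fixes c :: "'u::dc_riesz_space"
  assumes ne: "A \<noteq> {}" and bdd: "bdd_above A"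
  shows "sup (Sup A) c = Sup ((\<lambda>a. sup a c) ` A)"
proof (rule antisym)
  obtain M where M: "\<And>x. x \<in> A \<Longrightarrow> x \<le> M" using bdd by (auto simp: bdd_above_def)
  have bdd2: "bdd_above ((\<lambda>a. sup a c) ` A)"
    by (rule bdd_aboveI[of _ "sup M c"]) (auto intro: sup_mono M)
  obtain a0 where a0: "a0 \<in> A" using ne by auto
  show "sup (Sup A) c \<le> Sup ((\<lambda>a. sup a c) ` A)"
  proof (rule sup_least)
    show "Sup A \<le> Sup ((\<lambda>a. sup a c) ` A)"
    proof (rule cSup_least[OF ne])
      fix x assume "x \<in> A"
      then have "sup x c \<le> Sup ((\<lambda>a. sup a c) ` A)" using bdd2 by (intro cSup_upper) auto
      then show "x \<le> Sup ((\<lambda>a. sup a c) ` A)" by simp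
    qed
    have "sup a0 c \<le> Sup ((\<lambda>a. sup a c) ` A)" using bdd2 a0 by (intro cSup_upper) auto
    then show "c \<le> Sup ((\<lambda>a. sup a c) ` A)" by simp
  qed
  show "Sup ((\<lambda>a. sup a c) ` A) \<le> sup (Sup A) c"
  proof (rule cSup_least)
    show "(\<lambda>a. sup a c) ` A \<noteq> {}" using ne by simp
    fix y assume "y \<in> (\<lambda>a. sup a c) ` A"
    then obtain x where x: "x \<in> A" "y = sup x c" by auto
    have "x \<le> Sup A" using x(1) bdd by (rule cSup_upper)
    then show "y \<le> sup (Sup A) c" using x(2) by (simp add: le_supI1)
  qed
qed

section \<open>Disjointness and bands\<close>

lemma disj_sym: "disj x y \<longleftrightarrow> disj y (x::'u::dc_riesz_space)"
  unfolding disj_def by (simp add: inf.commute)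

lemma disj_zero [simp]: "disj 0 (y::'u::dc_riesz_space)"
  unfolding disj_def using rabs_nonneg[of y] by (simp add: rabs_def inf_absorb1)

lemma disj_self: "disj x (x::'u::dc_riesz_space) \<Longrightarrow> x = 0"
  unfolding disj_def by (simp add: rabs_eq_0_iff)

lemma disj_nonneg_iff: "0 \<le> x \<Longrightarrow> 0 \<le> y \<Longrightarrow> disj x (y::'u::dc_riesz_space) \<longleftrightarrow> inf x y = 0"
  unfolding disj_def by (simp add: rabs_of_nonneg)

lemma disj_mono: "disj x y \<Longrightarrow> rabs z \<le> rabs x \<Longrightarrow> disj z (y::'u::dc_riesz_space)"
  unfolding disj_def using inf_mono[of "rabs z" "rabs x" "rabs y" "rabs y"] rabs_nonneg[of z] rabs_nonneg[of y]
  by (simp add: antisym)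

lemma disj_add: "disj x z \<Longrightarrow> disj y z \<Longrightarrow> disj (x + y) (z::'u::dc_riesz_space)"
proof -
  assume xz: "disj x z" and yz: "disj y z"
  have "inf (rabs (x + y)) (rabs z) \<le> inf (rabs x + rabs y) (rabs z)"
    using rabs_triangle[of x y] by (rule inf_mono) simp
  also have "\<dots> \<le> inf (rabs x) (rabs z) + inf (rabs y) (rabs z)"
    by (intro inf_add_le rabs_nonneg)
  also have "\<dots> = 0" using xz yz unfolding disj_def by simp
  finally show ?thesis unfolding disj_def by (simp add: antisym rabs_nonneg)
qed

lemma disj_scaleR: "disj x y \<Longrightarrow> disj (c *\<^sub>R x) (y::'u::dc_riesz_space)"
proof -
  assume xy: "disj x y"
  define k where "k = max \<bar>c\<bar> 1"
  have k: "k > 0" "\<bar>c\<bar> \<le> k" "1 \<le> k" unfolding k_def by auto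
  have "inf (rabs (c *\<^sub>R x)) (rabs y) \<le> inf (k *\<^sub>R rabs x) (k *\<^sub>R rabs y)"
  proof (intro inf_mono)
    show "rabs (c *\<^sub>R x) \<le> k *\<^sub>R rabs x"
      unfolding rabs_scaleR using k by (intro scaleR_right_mono rabs_nonneg)
    show "rabs y \<le> k *\<^sub>R rabs y"
      using k rabs_nonneg[of y] scaleR_right_mono[of 1 k "rabs y"] by simp
  qed
  also have "\<dots> = 0" using xy k unfolding disj_def by (simp add: scaleR_inf_pos[symmetric])
  finally show ?thesis unfolding disj_def by (simp add: antisym rabs_nonneg)
qed

lemma dcompl_antimono: "S \<subseteq> S' \<Longrightarrow> dcompl S' \<subseteq> dcompl S"
  unfolding dcompl_def by auto

lemma subset_dcompl_dcompl: "S \<subseteq> dcompl (dcompl S)"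
  unfolding dcompl_def using disj_sym by auto

lemma dcompl_dcompl_dcompl: "dcompl (dcompl (dcompl S)) = dcompl S"
  by (meson antisym dcompl_antimono subset_dcompl_dcompl)

lemma in_dcompl_self: "x \<in> S \<Longrightarrow> x \<in> dcompl S \<Longrightarrow> x = (0::'u::dc_riesz_space)"
  unfolding dcompl_def using disj_self by auto

context
  fixes B :: "'u::dc_riesz_space set"
  assumes B: "is_band B"
begin

lemma band_zero: "0 \<in> B"
  using B unfolding is_band_def is_ideal_in_def by auto

lemma band_add: "x \<in> B \<Longrightarrow> y \<in> B \<Longrightarrow> x + y \<in> B"
  using B unfolding is_band_def is_ideal_in_def by auto

lemma band_scaleR: "x \<in> B \<Longrightarrow> c *\<^sub>R x \<in> B"
  using B unfolding is_band_def is_ideal_in_def by auto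

lemma band_solid: "x \<in> B \<Longrightarrow> rabs y \<le> rabs x \<Longrightarrow> y \<in> B"
  using B unfolding is_band_def is_ideal_in_def by auto

lemma band_Sup: "A \<subseteq> B \<Longrightarrow> A \<noteq> {} \<Longrightarrow> bdd_above A \<Longrightarrow> Sup A \<in> B"
  using B unfolding is_band_def by auto

lemma band_diff: "x \<in> B \<Longrightarrow> y \<in> B \<Longrightarrow> x - y \<in> B"
  using band_add[of x "- y"] band_scaleR[of y "- 1"] by simp

lemma band_nonneg_le: "x \<in> B \<Longrightarrow> 0 \<le> y \<Longrightarrow> y \<le> x \<Longrightarrow> y \<in> B"
  by (rule band_solid) (auto simp: rabs_of_nonneg)

lemma band_rabs: "x \<in> B \<Longrightarrow> rabs x \<in> B"
  by (rule band_solid) (auto simp: rabs_of_nonneg rabs_nonneg)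

end

lemma band_Int: "is_band C \<Longrightarrow> is_band E \<Longrightarrow> is_band (C \<inter> (E::'u::dc_riesz_space set))"
  unfolding is_band_def is_ideal_in_def by auto

lemma band_UNIV: "is_band (UNIV::'u::dc_riesz_space set)"
  unfolding is_band_def is_ideal_in_def by auto

lemma disj_Sup:
  fixes y :: "'u::dc_riesz_space"
  assumes A: "A \<noteq> {}" "bdd_above A" and disj: "\<And>a. a \<in> A \<Longrightarrow> disj a y"
  shows "disj (Sup A) y"
proof -
  obtain a0 where a0: "a0 \<in> A" using A by auto
  define s r where "s = Sup A" and "r = rabs y"
  have r0: "0 \<le> r" unfolding r_def by (rule rabs_nonneg)
  have disj_r: "inf r z = 0" if "0 \<le> z" "z \<le> rabs a" "a \<in> A" for a z
  proof -
    have "inf r z \<le> inf r (rabs a)" using that by (intro inf_mono) auto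
    also have "\<dots> = 0" using disj[OF that(3)] unfolding disj_def r_def by (simp add: inf.commute)
    finally show ?thesis using r0 that by (simp add: antisym)
  qed
  \<comment> \<open>\<open>pprt s\<close> is the supremum of the \<open>pprt a\<close>, while \<open>pprt (- s)\<close> is below \<open>pprt (- a0)\<close>.\<close>
  obtain M where M: "\<And>x. x \<in> A \<Longrightarrow> x \<le> M" using A(2) by (auto simp: bdd_above_def)
  have "inf r (pprt s) = Sup ((\<lambda>x. inf r x) ` (pprt ` A))"
    unfolding s_def pprt_def sup_Sup_const[OF A]
    using A(1) by (intro inf_Sup_distrib bdd_aboveI[of _ "sup M 0"]) (auto intro: sup_mono M)
  also have "(\<lambda>x. inf r x) ` (pprt ` A) = {0}"
    using A(1) disj_r[OF zero_le_pprt order.trans[OF _ rabs_pprt_le]]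
    by (force simp: image_image rabs_of_nonneg)
  finally have pos: "inf r (pprt s) = 0" by simp
  have "pprt (- s) \<le> pprt (- a0)"
    using cSup_upper[OF a0 A(2)] unfolding s_def by simp
  also have "\<dots> \<le> rabs a0"
    using rabs_pprt_le[of "- a0"] by (simp add: rabs_of_nonneg rabs_minus)
  finally have neg: "inf r (pprt (- s)) = 0" by (rule disj_r[OF zero_le_pprt _ a0])
  have "rabs s \<le> pprt s + pprt (- s)"
    unfolding rabs_le_iff pprt_def by (auto intro: add_increasing add_increasing2)
  then have "inf (rabs s) r \<le> inf (pprt s + pprt (- s)) r" by (rule inf_mono) simp
  also have "\<dots> \<le> inf (pprt s) r + inf (pprt (- s)) r"
    using r0 by (intro inf_add_le) auto
  also have "\<dots> = 0" using pos neg by (simp add: inf.commute)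
  finally show ?thesis unfolding disj_def r_def s_def
    using rabs_nonneg[of "Sup A"] rabs_nonneg[of y] by (simp add: antisym)
qed

lemma dcompl_is_band: "is_band (dcompl (S::'u::dc_riesz_space set))"
proof -
  have "is_ideal_in UNIV (dcompl S)"
    unfolding is_ideal_in_def dcompl_def by (auto intro: disj_add disj_scaleR disj_mono)
  moreover have "Sup A \<in> dcompl S" if "A \<subseteq> dcompl S" "A \<noteq> {}" "bdd_above A" for A
    using that disj_Sup unfolding dcompl_def by blast
  ultimately show ?thesis unfolding is_band_def by auto
qed

section \<open>Band projections\<close>

definition pos_bproj :: "'u::dc_riesz_space set \<Rightarrow> 'u \<Rightarrow> 'u" where
  "pos_bproj B x = Sup {y \<in> B. 0 \<le> y \<and> y \<le> x}"

lemma pos_bproj: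
  fixes B :: "'u::dc_riesz_space set"
  assumes B: "is_band B" and x: "0 \<le> x"
  shows "pos_bproj B x \<in> B" "0 \<le> pos_bproj B x" "pos_bproj B x \<le> x"
    "x - pos_bproj B x \<in> dcompl B"
proof -
  define Y where "Y = {y \<in> B. 0 \<le> y \<and> y \<le> x}"
  have Y0: "0 \<in> Y" unfolding Y_def using band_zero[OF B] x by auto
  have Ybdd: "bdd_above Y" unfolding Y_def by (auto intro: bdd_aboveI[of _ x])
  show in_B: "pos_bproj B x \<in> B" unfolding pos_bproj_def Y_def[symmetric]
    using Y0 Ybdd by (intro band_Sup[OF B]) (auto simp: Y_def)
  show nonneg: "0 \<le> pos_bproj B x" unfolding pos_bproj_def Y_def[symmetric] using Y0 Ybdd by (rule cSup_upper)
  show le: "pos_bproj B x \<le> x" unfolding pos_bproj_def Y_def[symmetric] using Y0 by (intro cSup_least) (auto simp: Y_def)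
  show "x - pos_bproj B x \<in> dcompl B"
    unfolding dcompl_def
  proof safe
    fix b assume b: "b \<in> B"
    define w where "w = inf (x - pos_bproj B x) (rabs b)"
    have w0: "0 \<le> w" unfolding w_def using le rabs_nonneg[of b] by simp
    have wB: "w \<in> B" by (rule band_nonneg_le[OF B band_rabs[OF B b] w0]) (simp add: w_def)
    \<comment> \<open>\<open>pos_bproj B x + w\<close> is again an element of \<open>B\<close> between \<open>0\<close> and \<open>x\<close>, so \<open>w\<close> vanishes by maximality.\<close>
    have "w \<le> x - pos_bproj B x" unfolding w_def by simp
    then have "pos_bproj B x + w \<in> Y"
      unfolding Y_def using band_add[OF B in_B wB] nonneg w0 by (simp add: le_diff_eq add.commute)
    then have "pos_bproj B x + w \<le> pos_bproj B x"
      unfolding pos_bproj_def Y_def[symmetric] using Ybdd by (rule cSup_upper)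
    then have "w = 0" using w0 by simp
    then show "disj (x - pos_bproj B x) b" unfolding disj_def w_def using le by (simp add: rabs_of_nonneg)
  qed
qed

lemma bp_onto_decomp:
  fixes B :: "'u::dc_riesz_space set"
  assumes B: "is_band B" and P: "is_bp_onto P B" and b: "b \<in> B" and d: "d \<in> dcompl B"
  shows "P (b + d) = b"
proof -
  have Pbd: "P (b + d) \<in> B" "(b + d) - P (b + d) \<in> dcompl B" using P unfolding is_bp_onto_def by auto
  have "P (b + d) - b \<in> B" using Pbd(1) b by (rule band_diff[OF B])
  moreover have "d - ((b + d) - P (b + d)) \<in> dcompl B" by (rule band_diff[OF dcompl_is_band d Pbd(2)])
  then have "P (b + d) - b \<in> dcompl B" by (simp add: algebra_simps)
  ultimately show ?thesis using in_dcompl_self by fastforce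
qed

lemma bp_onto_unique:
  assumes "is_band (B::'u::dc_riesz_space set)" "is_bp_onto P B" "is_bp_onto Q B"
  shows "P = Q"
proof
  fix x
  have "Q x \<in> B" "x - Q x \<in> dcompl B" using assms(3) unfolding is_bp_onto_def by auto
  from bp_onto_decomp[OF assms(1,2) this] show "P x = Q x" by simp
qed

lemma bp_onto_exists:
  fixes B :: "'u::dc_riesz_space set"
  assumes B: "is_band B"
  shows "\<exists>P. is_bp_onto P B"
proof
  define P where "P x = pos_bproj B (pprt x) - pos_bproj B (- nprt x)" for x
  show "is_bp_onto P B"
    unfolding is_bp_onto_def
  proof
    fix x :: 'u
    have parts: "0 \<le> pprt x" "0 \<le> - nprt x" by simp_all
    have "x - P x = (pprt x - pos_bproj B (pprt x)) - (- nprt x - pos_bproj B (- nprt x))"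
      unfolding P_def using prts[of x] by (simp add: algebra_simps)
    then show "P x \<in> B \<and> x - P x \<in> dcompl B" unfolding P_def
      using pos_bproj[OF B parts(1)] pos_bproj[OF B parts(2)]
      by (metis band_diff[OF B] band_diff[OF dcompl_is_band])
  qed
qed

lemma bproj_onto: "is_band B \<Longrightarrow> is_bp_onto (bproj B) B"
  unfolding bproj_def using bp_onto_exists bp_onto_unique by (metis theI)

lemma bproj_eqI: "is_band B \<Longrightarrow> is_bp_onto P B \<Longrightarrow> bproj B = P"
  using bproj_onto bp_onto_unique by blast

lemma band_proj_iff: "band_proj Q \<longleftrightarrow> (\<exists>C. is_band C \<and> Q = bproj (C::'u::dc_riesz_space set))"
  unfolding band_proj_def using bproj_eqI bproj_onto by metis

context
  fixes B :: "'u::dc_riesz_space set"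
  assumes B: "is_band B"
begin

lemma bproj_in: "bproj B x \<in> B"
  using bproj_onto[OF B] unfolding is_bp_onto_def by auto

lemma bproj_diff_in_dcompl: "x - bproj B x \<in> dcompl B"
  using bproj_onto[OF B] unfolding is_bp_onto_def by auto

lemma bproj_decomp: "b \<in> B \<Longrightarrow> d \<in> dcompl B \<Longrightarrow> bproj B (b + d) = b"
  by (rule bp_onto_decomp[OF B bproj_onto[OF B]])

lemma bproj_id: "b \<in> B \<Longrightarrow> bproj B b = b"
  using bproj_decomp[OF _ band_zero[OF dcompl_is_band[of B]], of b] by simp

lemma bproj_eq_0: "d \<in> dcompl B \<Longrightarrow> bproj B d = 0"
  using bproj_decomp[OF band_zero[OF B], of d] by simp

lemma bproj_id_iff: "bproj B x = x \<longleftrightarrow> x \<in> B"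
  using bproj_id bproj_in by metis

lemma bproj_add: "bproj B (x + y) = bproj B x + bproj B y"
proof -
  have "x + y = (bproj B x + bproj B y) + ((x - bproj B x) + (y - bproj B y))" by simp
  then show ?thesis
    using bproj_decomp band_add[OF B bproj_in bproj_in]
      band_add[OF dcompl_is_band bproj_diff_in_dcompl bproj_diff_in_dcompl] by metis
qed

lemma bproj_scaleR: "bproj B (c *\<^sub>R x) = c *\<^sub>R bproj B x"
proof -
  have "c *\<^sub>R x = c *\<^sub>R bproj B x + c *\<^sub>R (x - bproj B x)" by (simp add: algebra_simps)
  then show ?thesis
    using bproj_decomp band_scaleR[OF B bproj_in] band_scaleR[OF dcompl_is_band bproj_diff_in_dcompl]
    by metis
qed

lemma bproj_diff: "bproj B (x - y) = bproj B x - bproj B y"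
  using bproj_add[of x "- y"] bproj_scaleR[of "- 1" y] by simp

lemma bproj_nonneg: "0 \<le> x \<Longrightarrow> 0 \<le> bproj B x"
  and bproj_le_self: "0 \<le> x \<Longrightarrow> bproj B x \<le> x"
proof -
  assume x: "0 \<le> x"
  have "bproj B x = pos_bproj B x"
    using bproj_decomp[OF pos_bproj(1,4)[OF B x]] by simp
  then show "0 \<le> bproj B x" "bproj B x \<le> x" using pos_bproj[OF B x] by auto
qed

lemma bproj_mono: "x \<le> y \<Longrightarrow> bproj B x \<le> bproj B y"
  using bproj_nonneg[of "y - x"] by (simp add: bproj_diff)

lemma rabs_bproj_le: "rabs (bproj B x) \<le> rabs x"
proof -
  have "- bproj B x = bproj B (- x)" using bproj_scaleR[of "- 1" x] by simp
  then have "bproj B x \<le> bproj B (rabs x)" "- bproj B x \<le> bproj B (rabs x)"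
    using bproj_mono[OF le_rabs(1)] bproj_mono[OF le_rabs(2)] by auto
  then show ?thesis unfolding rabs_le_iff using bproj_le_self[OF rabs_nonneg, of x] by auto
qed

lemma bproj_dcompl: "bproj (dcompl B) x = x - bproj B x"
proof -
  have "is_bp_onto (\<lambda>x. x - bproj B x) (dcompl B)"
    unfolding is_bp_onto_def using bproj_diff_in_dcompl bproj_in subset_dcompl_dcompl by auto
  from bproj_eqI[OF dcompl_is_band this] show ?thesis by simp
qed

lemma dcompl_dcompl_band: "dcompl (dcompl B) = B"
proof
  show "dcompl (dcompl B) \<subseteq> B"
  proof
    fix x assume x: "x \<in> dcompl (dcompl B)"
    have "x - bproj B x \<in> dcompl (dcompl B)"
      using x subset_dcompl_dcompl[of B] bproj_in[of x] by (auto intro: band_diff[OF dcompl_is_band])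
    then have "x - bproj B x = 0" using bproj_diff_in_dcompl[of x] in_dcompl_self by blast
    then show "x \<in> B" using bproj_in[of x] by simp
  qed
qed (rule subset_dcompl_dcompl)

end

lemma bproj_UNIV: "bproj (UNIV::'u::dc_riesz_space set) = id"
  by (rule bproj_eqI[OF band_UNIV]) (auto simp: is_bp_onto_def dcompl_def)

lemma bproj_bproj:
  fixes C E :: "'u::dc_riesz_space set"
  assumes C: "is_band C" and E: "is_band E"
  shows "bproj C (bproj E x) = bproj (C \<inter> E) x"
proof -
  have "is_bp_onto (\<lambda>x. bproj C (bproj E x)) (C \<inter> E)"
    unfolding is_bp_onto_def
  proof safe
    fix x :: 'u
    show "bproj C (bproj E x) \<in> C" by (rule bproj_in[OF C])
    show "bproj C (bproj E x) \<in> E" by (rule band_solid[OF E bproj_in[OF E] rabs_bproj_le[OF C]])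
    have "x - bproj E x \<in> dcompl (C \<inter> E)" "bproj E x - bproj C (bproj E x) \<in> dcompl (C \<inter> E)"
      using bproj_diff_in_dcompl[OF E] bproj_diff_in_dcompl[OF C] dcompl_antimono by blast+
    from band_add[OF dcompl_is_band this]
    show "x - bproj C (bproj E x) \<in> dcompl (C \<inter> E)" by simp
  qed
  from bproj_eqI[OF band_Int[OF C E] this] show ?thesis by simp
qed

lemma bp_le_bproj_iff:
  fixes C E :: "'u::dc_riesz_space set"
  assumes C: "is_band C" and E: "is_band E"
  shows "bp_le (bproj C) (bproj E) \<longleftrightarrow> C \<subseteq> E"
proof
  assume "C \<subseteq> E"
  then show "bp_le (bproj C) (bproj E)" unfolding bp_le_def using bproj_bproj[OF C E] by (simp add: Int_absorb2)
next
  assume le: "bp_le (bproj C) (bproj E)"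
  show "C \<subseteq> E"
  proof
    fix c assume c: "c \<in> C"
    have "c = bproj C (bproj E c)" using le bproj_id[OF C c] unfolding bp_le_def by simp
    also have "\<dots> = bproj (C \<inter> E) c" by (rule bproj_bproj[OF C E])
    also have "\<dots> \<in> C \<inter> E" by (rule bproj_in[OF band_Int[OF C E]])
    finally show "c \<in> E" by simp
  qed
qed

lemma bp_Sup_bproj:
  fixes C :: "'i \<Rightarrow> 'u::dc_riesz_space set"
  assumes C: "\<And>i. i \<in> I \<Longrightarrow> is_band (C i)"
  shows "bp_Sup ((\<lambda>i. bproj (C i)) ` I) = bproj (dcompl (dcompl (\<Union>i\<in>I. C i)))"
proof -
  define G where "G = dcompl (dcompl (\<Union>i\<in>I. C i))"
  have G: "is_band G" unfolding G_def by (rule dcompl_is_band)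
  have upper: "bp_le (bproj (C i)) (bproj G)" if "i \<in> I" for i
    using that subset_dcompl_dcompl[of "\<Union>i\<in>I. C i"] unfolding G_def
    by (subst bp_le_bproj_iff[OF C dcompl_is_band]) auto
  have least: "G \<subseteq> E" if E: "is_band E" and "\<forall>i\<in>I. bp_le (bproj (C i)) (bproj E)" for E
  proof -
    have "(\<Union>i\<in>I. C i) \<subseteq> E" using that bp_le_bproj_iff[OF C E] by auto
    then show ?thesis unfolding G_def using dcompl_antimono dcompl_dcompl_band[OF E] by metis
  qed
  show ?thesis
    unfolding bp_Sup_def G_def[symmetric]
  proof (rule the_equality)
    fix Q assume Q: "band_proj Q \<and> (\<forall>P\<in>(\<lambda>i. bproj (C i)) ` I. bp_le P Q) \<and>
      (\<forall>R. band_proj R \<and> (\<forall>P\<in>(\<lambda>i. bproj (C i)) ` I. bp_le P R) \<longrightarrow> bp_le Q R)"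
    then obtain E where E: "is_band E" "Q = bproj E" by (auto simp: band_proj_iff)
    have "G \<subseteq> E" using Q E least by auto
    moreover have "E \<subseteq> G" using Q G upper E bp_le_bproj_iff[OF E(1) G] by (auto simp: band_proj_iff)
    ultimately show "Q = bproj G" using E by auto
  qed (use G upper least bp_le_bproj_iff[OF G] in \<open>auto simp: band_proj_iff\<close>)
qed

lemma bp_Inf_bproj:
  fixes K :: "'u::dc_riesz_space set"
  assumes K: "is_band K"
    and lower: "\<And>P. P \<in> F \<Longrightarrow> bp_le (bproj K) P"
    and greatest: "\<And>E. is_band E \<Longrightarrow> (\<forall>P\<in>F. bp_le (bproj E) P) \<Longrightarrow> E \<subseteq> K"
  shows "bp_Inf F = bproj K"
  unfolding bp_Inf_def
proof (rule the_equality)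
  fix Q assume Q: "band_proj Q \<and> (\<forall>P\<in>F. bp_le Q P) \<and> (\<forall>R. band_proj R \<and> (\<forall>P\<in>F. bp_le R P) \<longrightarrow> bp_le R Q)"
  then obtain E where E: "is_band E" "Q = bproj E" by (auto simp: band_proj_iff)
  have "E \<subseteq> K" using Q E greatest by auto
  moreover have "K \<subseteq> E" using Q K lower E bp_le_bproj_iff[OF K E(1)] by (auto simp: band_proj_iff)
  ultimately show "Q = bproj K" using E by auto
qed (use K lower greatest bp_le_bproj_iff[OF _ K] in \<open>auto simp: band_proj_iff\<close>)

section \<open>Conditional expectations on an order dense ideal\<close>

locale cond_exp_space =
  fixes X :: "'u::dc_riesz_space set" and T :: "'u \<Rightarrow> 'u" and e :: 'u
  assumes uc: "is_universal_completion_of X"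
    and unit: "weak_order_unit X e"
    and ce: "cond_exp X T e"
begin

lemma X_ideal: "is_ideal_in UNIV X"
  using uc unfolding is_universal_completion_of_def by auto

lemma X_zero: "0 \<in> X" and X_add: "x \<in> X \<Longrightarrow> y \<in> X \<Longrightarrow> x + y \<in> X"
  and X_scaleR: "x \<in> X \<Longrightarrow> c *\<^sub>R x \<in> X" and X_solid: "x \<in> X \<Longrightarrow> rabs y \<le> rabs x \<Longrightarrow> y \<in> X"
  using X_ideal unfolding is_ideal_in_def by auto

lemma X_diff: "x \<in> X \<Longrightarrow> y \<in> X \<Longrightarrow> x - y \<in> X"
  using X_add[of x "- y"] X_scaleR[of y "- 1"] by simp

lemma X_nonneg_le: "x \<in> X \<Longrightarrow> 0 \<le> y \<Longrightarrow> y \<le> x \<Longrightarrow> y \<in> X"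
  by (rule X_solid) (auto simp: rabs_of_nonneg)

lemma X_sum: "(\<And>k. k \<in> A \<Longrightarrow> f k \<in> X) \<Longrightarrow> sum f A \<in> X"
  by (induction A rule: infinite_finite_induct) (auto simp: X_zero X_add)

lemma X_bproj: "is_band B \<Longrightarrow> x \<in> X \<Longrightarrow> bproj B x \<in> X"
  using X_solid[OF _ rabs_bproj_le] .

lemma X_order_dense: "0 < v \<Longrightarrow> \<exists>x\<in>X. 0 < x \<and> x \<le> v"
  using uc unfolding is_universal_completion_of_def by auto

lemma e_in_X: "e \<in> X" and e_nonneg: "0 \<le> e"
  and e_weak_unit: "x \<in> X \<Longrightarrow> inf (rabs x) e = 0 \<Longrightarrow> x = 0"
  using unit unfolding weak_order_unit_def by auto

lemma X_nonneg_le_e: "0 \<le> y \<Longrightarrow> y \<le> e \<Longrightarrow> y \<in> X"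
  using X_nonneg_le[OF e_in_X] .

lemma T_in_X: "x \<in> X \<Longrightarrow> T x \<in> X"
  and T_add: "x \<in> X \<Longrightarrow> y \<in> X \<Longrightarrow> T (x + y) = T x + T y"
  and T_scaleR: "x \<in> X \<Longrightarrow> T (c *\<^sub>R x) = c *\<^sub>R T x"
  and T_nonneg: "x \<in> X \<Longrightarrow> 0 \<le> x \<Longrightarrow> 0 \<le> T x"
  and T_strictly_pos: "x \<in> X \<Longrightarrow> 0 < x \<Longrightarrow> 0 < T x"
  and T_idem: "x \<in> X \<Longrightarrow> T (T x) = T x"
  and T_e: "T e = e"
  and range_T_sup: "a \<in> T ` X \<Longrightarrow> b \<in> T ` X \<Longrightarrow> sup a b \<in> T ` X"
  and T_order_continuous: "D \<subseteq> X \<Longrightarrow> D \<noteq> {} \<Longrightarrow> \<forall>x\<in>D. \<forall>y\<in>D. \<exists>z\<in>D. z \<le> x \<and> z \<le> y \<Longrightarrow>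
    \<forall>x\<in>D. 0 \<le> x \<Longrightarrow> Inf D = 0 \<Longrightarrow> Inf (T ` D) = 0"
  using ce unfolding cond_exp_def by auto

lemma T_diff: "x \<in> X \<Longrightarrow> y \<in> X \<Longrightarrow> T (x - y) = T x - T y"
  using T_add[of x "- y"] T_scaleR[of y "- 1"] X_scaleR[of y "- 1"] by simp

lemma T_zero: "T 0 = 0"
  using T_scaleR[OF X_zero, of 0] by simp

lemma T_mono: "x \<in> X \<Longrightarrow> y \<in> X \<Longrightarrow> x \<le> y \<Longrightarrow> T x \<le> T y"
  using T_nonneg[of "y - x"] X_diff[of y x] T_diff[of y x] by simp

lemma T_le_e: "x \<in> X \<Longrightarrow> x \<le> e \<Longrightarrow> T x \<le> e"
  using T_mono[OF _ e_in_X, of x] T_e by simp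

lemma T_sum: "(\<And>k. k \<in> A \<Longrightarrow> f k \<in> X) \<Longrightarrow> T (sum f A) = (\<Sum>k\<in>A. T (f k))"
proof (induction A rule: infinite_finite_induct)
  case (insert x F)
  then show ?case using T_add[of "f x" "sum f F"] X_sum[of F f] by simp
qed (auto simp: T_zero)

lemma T_eq_0_imp_eq_0: "x \<in> X \<Longrightarrow> 0 \<le> x \<Longrightarrow> T x = 0 \<Longrightarrow> x = 0"
  using T_strictly_pos[of x] by (auto simp: order.strict_iff_order)

lemma range_T_fixed: "a \<in> T ` X \<Longrightarrow> T a = a"
  using T_idem by auto

lemma range_T_scaleR: "a \<in> T ` X \<Longrightarrow> c *\<^sub>R a \<in> T ` X"
proof -
  assume "a \<in> T ` X"
  then obtain x where "x \<in> X" "a = T x" by auto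
  then show ?thesis using T_scaleR X_scaleR by (auto intro!: image_eqI[of _ T "c *\<^sub>R x"])
qed

lemma range_T_inf: "a \<in> T ` X \<Longrightarrow> b \<in> T ` X \<Longrightarrow> inf a b \<in> T ` X"
proof -
  have minus: "- c \<in> T ` X" if "c \<in> T ` X" for c using range_T_scaleR[OF that, of "- 1"] by simp
  assume "a \<in> T ` X" "b \<in> T ` X"
  from minus[OF range_T_sup[OF minus[OF this(1)] minus[OF this(2)]]] show ?thesis
    by (subst inf_eq_neg_sup)
qed

lemma range_T_sum: "(\<And>k. k \<in> A \<Longrightarrow> f k \<in> X) \<Longrightarrow> (\<Sum>k\<in>A. T (f k)) \<in> T ` X"
  using T_sum[of A f] X_sum[of A f] by (auto intro!: image_eqI[of _ T "sum f A"])

lemma range_T_e: "e \<in> T ` X"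
  using T_e e_in_X by force

lemma below_T_tails_nonpos:
  fixes y :: "nat \<Rightarrow> 'u"
  assumes mono: "mono y" and y_in_X: "\<And>N. y N \<in> X"
    and bdd: "bdd_above (range y)" and Sup_in_X: "Sup (range y) \<in> X"
    and below: "\<And>N. z \<le> T (Sup (range y) - y N)"
  shows "z \<le> 0"
proof -
  define s where "s = Sup (range y)"
  define D where "D = range (\<lambda>N. s - y N)"
  have y_le_s: "y N \<le> s" for N unfolding s_def using bdd by (intro cSup_upper) auto
  have D_nonneg: "\<forall>x\<in>D. 0 \<le> x" unfolding D_def using y_le_s by auto
  have D_directed: "\<forall>a\<in>D. \<forall>b\<in>D. \<exists>c\<in>D. c \<le> a \<and> c \<le> b"
  proof (intro ballI)
    fix a b assume "a \<in> D" "b \<in> D"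
    then obtain N M where "a = s - y N" "b = s - y M" unfolding D_def by auto
    moreover have "y N \<le> y (max N M)" "y M \<le> y (max N M)" using mono by (auto simp: mono_def)
    ultimately show "\<exists>c\<in>D. c \<le> a \<and> c \<le> b"
      unfolding D_def by (intro bexI[of _ "s - y (max N M)"]) auto
  qed
  have Inf_nonneg: "0 \<le> Inf D" using D_nonneg by (intro cInf_greatest) (auto simp: D_def)
  have "bdd_below D" using D_nonneg by (auto intro: bdd_belowI[of _ 0])
  then have "Inf D \<le> s - y N" for N unfolding D_def by (intro cInf_lower) auto
  then have "y N \<le> s - Inf D" for N by (simp add: algebra_simps)
  then have "s \<le> s - Inf D" unfolding s_def by (intro cSup_least) auto
  then have "Inf D = 0" using Inf_nonneg by simp
  then have "Inf (T ` D) = 0"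
    using T_order_continuous[OF _ _ D_directed D_nonneg] X_diff[OF Sup_in_X y_in_X]
    unfolding D_def s_def by auto
  moreover have "z \<le> Inf (T ` D)" using below unfolding D_def s_def by (intro cInf_greatest) auto
  ultimately show ?thesis by simp
qed

lemma Sup_inf_multiples_e:
  assumes x: "x \<in> X" "0 \<le> x"
  shows "Sup (range (\<lambda>n::nat. inf x (real n *\<^sub>R e))) = x"
proof -
  define s where "s = Sup (range (\<lambda>n::nat. inf x (real n *\<^sub>R e)))"
  have bdd: "bdd_above (range (\<lambda>n::nat. inf x (real n *\<^sub>R e)))" by (rule bdd_aboveI[of _ x]) auto
  have below_s: "inf x (real n *\<^sub>R e) \<le> s" for n unfolding s_def using bdd by (intro cSup_upper) auto
  have s_le: "s \<le> x" unfolding s_def by (intro cSup_least) auto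
  define w where "w = inf (x - s) e"
  have w: "0 \<le> w" "w \<le> e" "w \<le> x - s" unfolding w_def using s_le e_nonneg by auto
  \<comment> \<open>Each step from \<open>n e\<close> to \<open>(n + 1) e\<close> adds at least \<open>w\<close> below \<open>x\<close>, so \<open>w\<close> is infinitesimal.\<close>
  have "real n *\<^sub>R w \<le> inf x (real n *\<^sub>R e)" for n
  proof (induction n)
    case (Suc n)
    have "real (Suc n) *\<^sub>R w = real n *\<^sub>R w + w" by (simp add: algebra_simps)
    also have "\<dots> \<le> s + (x - s)" using order.trans[OF Suc below_s[of n]] w(3) by (rule add_mono)
    finally have "real (Suc n) *\<^sub>R w \<le> x" by simp
    moreover have "real (Suc n) *\<^sub>R w \<le> real (Suc n) *\<^sub>R e" using w(2) by (intro scaleR_left_mono) auto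
    ultimately show ?case by simp
  qed (use x in simp)
  then have "w = 0" using w(1) by (intro archimedean_zero[of w x]) (auto intro: order.trans)
  moreover have "0 \<le> s" using below_s[of 0] x(2) by (simp add: inf_absorb2)
  then have "x - s \<in> X" using s_le by (intro X_nonneg_le[OF x(1)]) auto
  moreover have "rabs (x - s) = x - s" using s_le by (simp add: rabs_of_nonneg)
  ultimately have "x - s = 0" using e_weak_unit unfolding w_def by metis
  then show ?thesis unfolding s_def by simp
qed

lemma T_bproj_in_band_of_le_multiple:
  assumes E: "is_band E" and TE: "T (bproj E e) \<in> E"
    and y: "y \<in> X" "0 \<le> y" "y \<le> c *\<^sub>R e"
  shows "T (bproj E y) \<in> E"
proof -
  have "bproj E y \<le> c *\<^sub>R bproj E e" using bproj_mono[OF E y(3)] bproj_scaleR[OF E] by simp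
  then have "T (bproj E y) \<le> c *\<^sub>R T (bproj E e)"
    using T_mono[OF X_bproj[OF E y(1)] X_scaleR[OF X_bproj[OF E e_in_X]]] T_scaleR[OF X_bproj[OF E e_in_X]]
    by simp
  then show ?thesis
    using band_nonneg_le[OF E band_scaleR[OF E TE]] T_nonneg[OF X_bproj[OF E y(1)] bproj_nonneg[OF E y(2)]]
    by blast
qed

lemma T_bproj_in_band:
  assumes E: "is_band E" and TE: "T (bproj E e) \<in> E" and x: "x \<in> X" "0 \<le> x"
  shows "T (bproj E x) \<in> E"
proof -
  define Q where "Q = bproj (dcompl E)"
  define y where "y n = inf x (real n *\<^sub>R e)" for n :: nat
  have "0 \<le> real n *\<^sub>R e" for n by (rule scaleR_nonneg_nonneg[OF _ e_nonneg]) simp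
  then have y: "y n \<in> X" "0 \<le> y n" "y n \<le> x" for n
    unfolding y_def using x by (auto intro: X_nonneg_le[OF x(1)])
  have Q_T_le: "Q (T (bproj E x)) \<le> T (x - y n)" for n
  proof -
    have rest: "x - y n \<in> X" "0 \<le> x - y n" using X_diff[OF x(1) y(1)] y(3) by auto
    have "T (bproj E (y n)) \<in> E"
      using T_bproj_in_band_of_le_multiple[OF E TE y(1,2), where c = "real n"] by (simp add: y_def)
    then have "Q (T (bproj E (y n))) = 0" unfolding Q_def bproj_dcompl[OF E] using bproj_id[OF E] by simp
    moreover have "T (bproj E x) = T (bproj E (y n)) + T (bproj E (x - y n))"
      using bproj_add[OF E, of "y n" "x - y n"] T_add[OF X_bproj[OF E y(1)] X_bproj[OF E rest(1)]] by simp
    ultimately have "Q (T (bproj E x)) = Q (T (bproj E (x - y n)))"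
      unfolding Q_def using bproj_add[OF dcompl_is_band[of E]] by simp
    also have "\<dots> \<le> T (bproj E (x - y n))"
      unfolding Q_def by (rule bproj_le_self[OF dcompl_is_band T_nonneg[OF X_bproj[OF E rest(1)] bproj_nonneg[OF E rest(2)]]])
    also have "\<dots> \<le> T (x - y n)" by (rule T_mono[OF X_bproj[OF E rest(1)] rest(1) bproj_le_self[OF E rest(2)]])
    finally show ?thesis .
  qed
  have "Q (T (bproj E x)) \<le> 0"
  proof (rule below_T_tails_nonpos)
    show "mono y" unfolding y_def using e_nonneg by (intro monoI inf_mono order_refl scaleR_right_mono) auto
    show "bdd_above (range y)" using y(3) by (intro bdd_aboveI[of _ x]) auto
    show "Sup (range y) \<in> X" "Q (T (bproj E x)) \<le> T (Sup (range y) - y n)" for n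
      unfolding y_def Sup_inf_multiples_e[OF x] using x(1) Q_T_le[unfolded y_def] by auto
  qed (rule y(1))
  moreover have "0 \<le> Q (T (bproj E x))"
    unfolding Q_def by (rule bproj_nonneg[OF dcompl_is_band T_nonneg[OF X_bproj[OF E x(1)] bproj_nonneg[OF E x(2)]]])
  ultimately have "bproj (dcompl E) (T (bproj E x)) = 0" unfolding Q_def by simp
  then have "bproj E (T (bproj E x)) = T (bproj E x)" unfolding bproj_dcompl[OF E] by simp
  then show ?thesis using bproj_id_iff[OF E] by blast
qed

lemma bproj_T_commute:
  assumes E: "is_band E" and TE: "T (bproj E e) = bproj E e" and x: "x \<in> X"
  shows "bproj E (T x) = T (bproj E x)"
proof -
  have TEd: "T (bproj (dcompl E) e) \<in> dcompl E"
    using T_diff[OF e_in_X X_bproj[OF E e_in_X]] T_e TE bproj_in[OF dcompl_is_band[of E], of e]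
    unfolding bproj_dcompl[OF E] by simp
  \<comment> \<open>For \<open>y \<ge> 0\<close>, both \<open>T (bproj E y)\<close> and \<open>T (bproj (dcompl E) y)\<close> stay in their bands.\<close>
  have pos: "bproj E (T y) = T (bproj E y)" if y: "y \<in> X" "0 \<le> y" for y
  proof -
    have "T y = T (bproj E y) + T (bproj (dcompl E) y)"
      using T_add[OF X_bproj[OF E y(1)] X_bproj[OF dcompl_is_band[of E] y(1)]] unfolding bproj_dcompl[OF E] by simp
    then show ?thesis
      using bproj_decomp[OF E T_bproj_in_band[OF E _ y] T_bproj_in_band[OF dcompl_is_band TEd y]]
        TE bproj_in[OF E] by simp
  qed
  define a b where "a = pprt x" and "b = - nprt x"
  have ab: "a \<in> X" "0 \<le> a" "b \<in> X" "0 \<le> b" "x = a - b"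
    using X_solid[OF x rabs_pprt_le] X_solid[OF x, of b] rabs_nprt_le[of x] prts[of x]
    unfolding a_def b_def by (auto simp: rabs_minus)
  have "bproj E (T x) = bproj E (T a) - bproj E (T b)"
    using T_diff[OF ab(1,3)] bproj_diff[OF E] ab(5) by simp
  also have "\<dots> = T (bproj E a) - T (bproj E b)" using pos[OF ab(1,2)] pos[OF ab(3,4)] by simp
  also have "\<dots> = T (bproj E x)"
    using T_diff[OF X_bproj[OF E ab(1)] X_bproj[OF E ab(3)]] bproj_diff[OF E] ab(5) by simp
  finally show ?thesis .
qed

lemma band_trivial_if_bproj_e_eq_0:
  assumes K: "is_band K" and Ke: "bproj K e = 0" and x: "x \<in> K"
  shows "x = 0"
proof (rule ccontr)
  assume "x \<noteq> 0"
  then have "0 < rabs x" using rabs_nonneg[of x] rabs_eq_0_iff[of x] by (simp add: order.strict_iff_order)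
  then obtain y where y: "y \<in> X" "0 < y" "y \<le> rabs x" using X_order_dense by blast
  have "y \<in> K" using y by (intro band_solid[OF K x]) (simp add: rabs_of_nonneg)
  moreover have "e \<in> dcompl K" using bproj_diff_in_dcompl[OF K, of e] Ke by simp
  ultimately have "inf (rabs y) e = 0"
    unfolding dcompl_def disj_def using e_nonneg by (auto simp: rabs_of_nonneg inf.commute)
  then show False using e_weak_unit[OF y(1)] y(2) by simp
qed

end

section \<open>Unital \<open>f\<close>-algebras\<close>

locale unital_f_algebra =
  fixes mult :: "'u::dc_riesz_space \<Rightarrow> 'u \<Rightarrow> 'u" and e :: 'u
  assumes falg: "f_algebra_unit mult e"
begin

lemma mult_add_right: "mult x (y + z) = mult x y + mult x z"
  and mult_add_left: "mult (x + y) z = mult x z + mult y z"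
  and mult_scaleR_right: "mult x (c *\<^sub>R y) = c *\<^sub>R mult x y"
  and mult_assoc: "mult (mult x y) z = mult x (mult y z)"
  and mult_nonneg: "0 \<le> x \<Longrightarrow> 0 \<le> y \<Longrightarrow> 0 \<le> mult x y"
  and mult_disjoint: "inf x y = 0 \<Longrightarrow> 0 \<le> z \<Longrightarrow> inf (mult z x) y = 0 \<and> inf (mult x z) y = 0"
  and mult_unit_left: "mult e x = x"
  and mult_unit_right: "mult x e = x"
  using falg unfolding f_algebra_unit_def by simp_all

lemma mult_diff_right: "mult x (y - z) = mult x y - mult x z"
  using mult_add_right[of x "y - z" z] by (simp add: algebra_simps)

lemma mult_diff_left: "mult (x - y) z = mult x z - mult y z"
  using mult_add_left[of "x - y" y z] by (simp add: algebra_simps)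

lemma mult_mono_right: "0 \<le> a \<Longrightarrow> x \<le> y \<Longrightarrow> mult a x \<le> mult a y"
  using mult_nonneg[of a "y - x"] mult_diff_right[of a y x] by simp

lemma mult_mono_left: "0 \<le> z \<Longrightarrow> a \<le> b \<Longrightarrow> mult a z \<le> mult b z"
  using mult_nonneg[of "b - a" z] mult_diff_left[of b a z] by simp

lemma mult_le_unit: "g \<le> e \<Longrightarrow> 0 \<le> z \<Longrightarrow> mult g z \<le> z"
  using mult_mono_left[of z g e] mult_unit_left[of z] by simp

lemma prod_unit_minus_mult_unit_plus_sum_le:
  fixes t :: "nat \<Rightarrow> 'u"
  assumes e: "0 \<le> e" and t: "\<And>i. 0 \<le> t i" "\<And>i. t i \<le> e"
  defines "\<pi> ks \<equiv> foldr (\<lambda>i a. mult (e - t i) a) ks e"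
  shows "0 \<le> \<pi> ks \<and> \<pi> ks \<le> e \<and> mult (\<pi> ks) (e + sum_list (map t ks)) \<le> e"
proof (induction ks)
  case Nil
  then show ?case using e mult_unit_left[of e] unfolding \<pi>_def by simp
next
  case (Cons i js)
  define s where "s = sum_list (map t js)"
  have IH: "0 \<le> \<pi> js" "\<pi> js \<le> e" "mult (\<pi> js) (e + s) \<le> e" using Cons unfolding s_def by auto
  have ti: "0 \<le> e - t i" "e - t i \<le> e" using t by auto
  have "mult (e - t i) (\<pi> js) \<le> mult (e - t i) e" by (rule mult_mono_right[OF ti(1) IH(2)])
  then have nonneg_le: "0 \<le> mult (e - t i) (\<pi> js)" "mult (e - t i) (\<pi> js) \<le> e"
    using mult_nonneg[OF ti(1) IH(1)] ti(2) by (auto simp: mult_unit_right intro: order.trans)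
  have "mult (mult (e - t i) (\<pi> js)) (e + (t i + s)) = mult (e - t i) (mult (\<pi> js) (t i) + mult (\<pi> js) (e + s))"
    by (simp add: mult_assoc mult_add_right algebra_simps)
  also have "\<dots> \<le> mult (e - t i) (t i + e)"
    by (rule mult_mono_right[OF ti(1) add_mono[OF mult_le_unit[OF IH(2) t(1)] IH(3)]])
  also have "\<dots> = e - mult (t i) (t i)"
    by (simp add: mult_add_right mult_diff_left mult_unit_left mult_unit_right)
  also have "\<dots> \<le> e" using mult_nonneg[OF t(1) t(1)] by simp
  finally show ?case using nonneg_le unfolding \<pi>_def s_def by simp
qed

lemma mult_bproj_unit:
  assumes B: "is_band B" and e: "0 \<le> e" and g: "g \<in> B" "0 \<le> g"
  shows "mult g (bproj B e) = g"
proof -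
  define D where "D = dcompl B"
  have D: "is_band D" unfolding D_def by (rule dcompl_is_band)
  define w where "w = mult g (bproj D e)"
  have De: "0 \<le> bproj D e" by (rule bproj_nonneg[OF D e])
  have w: "0 \<le> w" unfolding w_def by (rule mult_nonneg[OF g(2) De])
  \<comment> \<open>\<open>w\<close> is disjoint from \<open>D\<close> (being a multiple of \<open>g \<in> B\<close>) and from \<open>B\<close> (being a multiple of \<open>bproj D e\<close>).\<close>
  have "disj (bproj D w) g" "disj (bproj D e) (bproj B w)"
    using g bproj_in[OF D, of w] bproj_in[OF B, of w] bproj_in[OF D, of e] unfolding D_def dcompl_def by auto
  then have "inf g (bproj D w) = 0" "inf (bproj D e) (bproj B w) = 0"
    using bproj_nonneg[OF D w] bproj_nonneg[OF B w] De g(2) by (auto simp: disj_nonneg_iff inf.commute)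
  then have "inf w (bproj D w) = 0" "inf w (bproj B w) = 0"
    unfolding w_def using mult_disjoint g(2) De by blast+
  then have "bproj D w = 0" "bproj B w = 0"
    using bproj_le_self[OF D w] bproj_le_self[OF B w] by (simp_all add: inf_absorb2)
  then have "w = 0" using bproj_dcompl[OF B, of w] unfolding D_def by simp
  then show ?thesis
    using mult_diff_right[of g e "bproj B e"] mult_unit_right[of g] bproj_dcompl[OF B, of e]
    unfolding w_def D_def by simp
qed

end

section \<open>A \<open>T\<close>-independent sequence of band projections\<close>

locale indep_sequence = cond_exp_space X T e + unital_f_algebra mult e
  for X :: "'u::dc_riesz_space set" and T e mult +
  fixes P :: "nat \<Rightarrow> 'u \<Rightarrow> 'u"
  assumes bp: "\<And>n. band_proj (P n)"
    and ind: "T_indep T mult e P"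
begin

definition Pband :: "nat \<Rightarrow> 'u set" where
  "Pband k = (SOME C. is_band C \<and> P k = bproj C)"

lemma Pband: "is_band (Pband k)" "P k = bproj (Pband k)"
proof -
  obtain C where "is_band C \<and> P k = bproj C" using bp[of k] unfolding band_proj_iff by blast
  then have "is_band (Pband k) \<and> P k = bproj (Pband k)" unfolding Pband_def by (rule someI)
  then show "is_band (Pband k)" "P k = bproj (Pband k)" by auto
qed

definition pe :: "nat \<Rightarrow> 'u" where "pe k = P k e"
definition tpe :: "nat \<Rightarrow> 'u" where "tpe k = T (pe k)"
definition psum :: "nat \<Rightarrow> 'u" where "psum N = (\<Sum>k<N. tpe k)"

lemma pe_eq: "pe k = bproj (Pband k) e"
  unfolding pe_def by (simp only: Pband(2))

lemma pe_nonneg: "0 \<le> pe k"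
  unfolding pe_eq by (rule bproj_nonneg[OF Pband(1) e_nonneg])

lemma pe_le_e: "pe k \<le> e"
  unfolding pe_eq by (rule bproj_le_self[OF Pband(1) e_nonneg])

lemma pe_in_Pband: "pe k \<in> Pband k"
  unfolding pe_eq by (rule bproj_in[OF Pband(1)])

lemma pe_in_X: "pe k \<in> X"
  by (rule X_nonneg_le_e[OF pe_nonneg pe_le_e])

lemma tpe_nonneg: "0 \<le> tpe k"
  unfolding tpe_def by (rule T_nonneg[OF pe_in_X pe_nonneg])

lemma tpe_le_e: "tpe k \<le> e"
  unfolding tpe_def by (rule T_le_e[OF pe_in_X pe_le_e])

lemma psum_in_range_T: "psum N \<in> T ` X"
  unfolding psum_def tpe_def by (rule range_T_sum) (rule pe_in_X)

lemma psum_in_X: "psum N \<in> X"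
  unfolding psum_def tpe_def by (rule X_sum) (rule T_in_X[OF pe_in_X])

lemma psum_nonneg: "0 \<le> psum N"
  unfolding psum_def by (rule sum_nonneg) (rule tpe_nonneg)

lemma psum_mono: "N \<le> M \<Longrightarrow> psum N \<le> psum M"
  unfolding psum_def by (rule sum_mono2) (auto simp: tpe_nonneg)

lemma psum_split: "n \<le> N \<Longrightarrow> psum N = psum n + sum tpe {n..<N}"
  unfolding psum_def by (metis atLeast0LessThan sum.atLeastLessThan_concat zero_le)

definition compl_prod :: "nat list \<Rightarrow> 'u" where
  "compl_prod is = foldr (\<lambda>i f. (\<lambda>x. x - P i x) \<circ> f) is id e"

lemma compl_prod_Cons: "compl_prod (i # is) = bproj (dcompl (Pband i)) (compl_prod is)"
  unfolding compl_prod_def using bproj_dcompl[OF Pband(1)] Pband(2) by simp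

lemma compl_prod_ge:
  assumes w: "0 \<le> w" "w \<le> e" "\<And>k. k \<in> set ks \<Longrightarrow> w \<in> dcompl (Pband k)"
  shows "w \<le> compl_prod ks \<and> 0 \<le> compl_prod ks \<and> compl_prod ks \<le> e"
  using w(3)
proof (induction ks)
  case Nil
  then show ?case using w e_nonneg by (simp add: compl_prod_def)
next
  case (Cons i js)
  define F where "F = compl_prod js"
  have F: "w \<le> F" "0 \<le> F" "F \<le> e" using Cons unfolding F_def by auto
  have Ci: "is_band (dcompl (Pband i))" by (rule dcompl_is_band)
  have "w = bproj (dcompl (Pband i)) w" using bproj_id[OF Ci] Cons.prems by simp
  also have "\<dots> \<le> bproj (dcompl (Pband i)) F" by (rule bproj_mono[OF Ci F(1)])
  finally show ?case
    unfolding compl_prod_Cons F_def[symmetric]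
    using bproj_nonneg[OF Ci F(2)] bproj_le_self[OF Ci F(2)] F(3) by auto
qed

lemma T_compl_prod:
  assumes "distinct is" "is \<noteq> []"
  shows "T (compl_prod is) = foldr (\<lambda>i a. mult (e - tpe i) a) is e"
proof -
  have "T (compl_prod is) = foldr (\<lambda>i a. mult (T (e - P i e)) a) is e"
    using ind assms unfolding T_indep_def compl_prod_def Let_def
    by (drule_tac x = "is" in spec, drule_tac x = "\<lambda>_. False" in spec) simp
  also have "\<dots> = foldr (\<lambda>i a. mult (e - tpe i) a) is e"
    using T_diff[OF e_in_X pe_in_X] T_e unfolding tpe_def pe_def by simp
  finally show ?thesis .
qed

text \<open>If \<open>w\<close> is disjoint from all \<open>P k e\<close> with \<open>k \<ge> n\<close>, then \<open>T w \<le> \<Prod>k\<in>{n..<N}. (e - tpe k)\<close>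
  by independence, and the product inequality turns this into a uniform bound.\<close>

lemma mult_T_psum_le:
  assumes w: "0 \<le> w" "w \<le> e" "\<And>k. n \<le> k \<Longrightarrow> w \<in> dcompl (Pband k)"
  shows "mult (T w) (psum N) \<le> psum n + e"
proof -
  have wX: "w \<in> X" by (rule X_nonneg_le_e[OF w(1,2)])
  have g: "0 \<le> T w" "T w \<le> e" using T_nonneg[OF wX w(1)] T_le_e[OF wX w(2)] by auto
  show ?thesis
  proof (cases "n < N")
    case False
    then have "mult (T w) (psum N) \<le> psum n"
      using order.trans[OF mult_le_unit[OF g(2) psum_nonneg] psum_mono[of N n]] by simp
    then show ?thesis using e_nonneg by (simp add: add_increasing2)
  next
    case True
    define \<pi> where "\<pi> = foldr (\<lambda>i a. mult (e - tpe i) a) [n..<N] e"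
    have F: "w \<le> compl_prod [n..<N]" "0 \<le> compl_prod [n..<N]" "compl_prod [n..<N] \<le> e"
      using compl_prod_ge[OF w(1,2), where ks = "[n..<N]"] w(3) by auto
    have "T w \<le> T (compl_prod [n..<N])" by (rule T_mono[OF wX X_nonneg_le_e[OF F(2,3)] F(1)])
    also have "\<dots> = \<pi>" unfolding \<pi>_def using True by (intro T_compl_prod) auto
    finally have "mult (T w) (e + sum tpe {n..<N}) \<le> mult \<pi> (e + sum tpe {n..<N})"
      using e_nonneg by (intro mult_mono_left) (auto intro: add_nonneg_nonneg sum_nonneg tpe_nonneg)
    also have "\<dots> \<le> e"
      using prod_unit_minus_mult_unit_plus_sum_le[OF e_nonneg, where t = tpe and ks = "[n..<N]"] tpe_nonneg tpe_le_e
      unfolding \<pi>_def by (simp add: sum_set_upt_conv_sum_list_nat[symmetric])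
    finally have "T w + mult (T w) (sum tpe {n..<N}) \<le> e" by (simp add: mult_add_right mult_unit_right)
    moreover have "mult (T w) (sum tpe {n..<N}) \<le> T w + mult (T w) (sum tpe {n..<N})" using g(1) by simp
    ultimately have tail: "mult (T w) (sum tpe {n..<N}) \<le> e" by (rule order.trans[rotated])
    have "mult (T w) (psum N) = mult (T w) (psum n) + mult (T w) (sum tpe {n..<N})"
      using psum_split[of n N] True by (simp add: mult_add_right)
    also have "\<dots> \<le> psum n + e" by (rule add_mono[OF mult_le_unit[OF g(2) psum_nonneg] tail])
    finally show ?thesis .
  qed
qed

definition tail_band :: "nat \<Rightarrow> 'u set" where
  "tail_band n = dcompl (dcompl (\<Union>k\<in>{n..}. Pband k))"

lemma tail_band: "is_band (tail_band n)"
  unfolding tail_band_def by (rule dcompl_is_band)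

lemma Pband_subset_tail_band: "n \<le> k \<Longrightarrow> Pband k \<subseteq> tail_band n"
  unfolding tail_band_def using subset_dcompl_dcompl[of "\<Union>k\<in>{n..}. Pband k"] by auto

lemma bp_Sup_tail: "bp_Sup {P k | k. n \<le> k} = bproj (tail_band n)"
proof -
  have "{P k | k. n \<le> k} = (\<lambda>k. bproj (Pband k)) ` {n..}" using Pband(2) by auto
  then show ?thesis unfolding tail_band_def using bp_Sup_bproj[OF Pband(1)] by simp
qed

primrec tail_sup :: "nat \<Rightarrow> nat \<Rightarrow> 'u" where
  "tail_sup n 0 = 0"
| "tail_sup n (Suc m) = (if n \<le> m then sup (tail_sup n m) (pe m) else tail_sup n m)"

lemma tail_sup_nonneg: "0 \<le> tail_sup n m"
  by (induction m) (auto intro: le_supI1)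

lemma tail_sup_le_e: "tail_sup n m \<le> e"
  by (induction m) (auto simp: e_nonneg pe_le_e)

lemma tail_sup_in_X: "tail_sup n m \<in> X"
  by (rule X_nonneg_le_e[OF tail_sup_nonneg tail_sup_le_e])

lemma tail_sup_mono: "mono (tail_sup n)"
  by (rule mono_iff_le_Suc[THEN iffD2]) auto

lemma pe_le_tail_sup: "n \<le> k \<Longrightarrow> pe k \<le> tail_sup n (Suc k)"
  by simp

lemma sup_le_add: "0 \<le> a \<Longrightarrow> 0 \<le> b \<Longrightarrow> sup a (b::'u) \<le> a + b"
  by (auto intro: add_increasing add_increasing2)

lemma tail_sup_in_tail_band: "tail_sup n m \<in> tail_band n"
proof (induction m)
  case (Suc m)
  have "sup (tail_sup n m) (pe m) \<in> tail_band n" if "n \<le> m"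
  proof (rule band_nonneg_le[OF tail_band])
    show "tail_sup n m + pe m \<in> tail_band n"
      using Suc pe_in_Pband Pband_subset_tail_band[OF that] by (intro band_add[OF tail_band]) auto
    show "sup (tail_sup n m) (pe m) \<le> tail_sup n m + pe m" by (rule sup_le_add[OF tail_sup_nonneg pe_nonneg])
  qed (rule le_supI1[OF tail_sup_nonneg])
  then show ?case using Suc by simp
qed (simp add: band_zero[OF tail_band])

lemma tail_sup_le_sum: "tail_sup n m \<le> sum pe {n..<m}"
proof (induction m)
  case (Suc m)
  show ?case
  proof (cases "n \<le> m")
    case True
    have "sup (tail_sup n m) (pe m) \<le> tail_sup n m + pe m" by (rule sup_le_add[OF tail_sup_nonneg pe_nonneg])
    also have "\<dots> \<le> sum pe {n..<m} + pe m" using Suc by simp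
    also have "\<dots> = sum pe {n..<Suc m}" using True by simp
    finally show ?thesis using True by simp
  qed (use Suc in simp)
qed simp

lemma bproj_tail_band_e: "bproj (tail_band n) e = Sup (range (tail_sup n))"
proof -
  define \<rho> where "\<rho> = Sup (range (tail_sup n))"
  have bdd: "bdd_above (range (tail_sup n))" by (rule bdd_aboveI[of _ e]) (auto intro: tail_sup_le_e)
  have le_\<rho>: "tail_sup n m \<le> \<rho>" for m unfolding \<rho>_def using bdd by (intro cSup_upper) auto
  have \<rho>_le_e: "\<rho> \<le> e" unfolding \<rho>_def by (rule cSup_least) (auto intro: tail_sup_le_e)
  have in_tail: "\<rho> \<in> tail_band n"
    unfolding \<rho>_def by (rule band_Sup[OF tail_band]) (auto intro: tail_sup_in_tail_band bdd)
  \<comment> \<open>\<open>\<rho>\<close> lies between \<open>pe k\<close> and \<open>e\<close>, so \<open>e - \<rho>\<close> is killed by every \<open>P k\<close> with \<open>k \<ge> n\<close>.\<close>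
  have "e - \<rho> \<in> dcompl (Pband k)" if k: "n \<le> k" for k
  proof -
    have "pe k = bproj (Pband k) (pe k)" using bproj_id[OF Pband(1) pe_in_Pband] by simp
    also have "\<dots> \<le> bproj (Pband k) \<rho>"
      by (rule bproj_mono[OF Pband(1) order.trans[OF pe_le_tail_sup[OF k] le_\<rho>]])
    finally have "pe k \<le> bproj (Pband k) \<rho>" .
    moreover have "bproj (Pband k) \<rho> \<le> pe k" unfolding pe_eq by (rule bproj_mono[OF Pband(1) \<rho>_le_e])
    ultimately have "bproj (Pband k) (e - \<rho>) = 0" using bproj_diff[OF Pband(1), of k e \<rho>] unfolding pe_eq by simp
    then show ?thesis using bproj_diff_in_dcompl[OF Pband(1), of "e - \<rho>" k] by simp
  qed
  then have "e - \<rho> \<in> dcompl (tail_band n)"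
    unfolding tail_band_def dcompl_dcompl_dcompl unfolding dcompl_def by auto
  then show ?thesis using bproj_decomp[OF tail_band in_tail] unfolding \<rho>_def by fastforce
qed

end

section \<open>The band on which the series diverges\<close>

locale series_band = indep_sequence X T e mult P
  for X :: "'u::dc_riesz_space set" and T e mult P +
  fixes B :: "'u set" and u :: 'u
  assumes B: "is_band B" and u_in_dcompl: "u \<in> dcompl B" and u_nonneg: "0 \<le> u"
    and series_eq: "sc_equiv X (series_rep (\<lambda>n. T (P n e))) (inftyB_plus_rep X B u)"
begin

abbreviation "PB \<equiv> bproj B"
abbreviation "PD \<equiv> bproj (dcompl B)"

lemma dcompl_B: "is_band (dcompl B)"
  by (rule dcompl_is_band)

lemma PD_eq: "PD x = x - PB x"
  by (rule bproj_dcompl[OF B])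

lemma PD_u: "PD u = u"
  by (rule bproj_id[OF dcompl_B u_in_dcompl])

lemma PD_PB_add_u: "PD (PB x + u) = u"
  using bproj_add[OF dcompl_B] bproj_eq_0[OF dcompl_B] bproj_in[OF B] dcompl_dcompl_band[OF B] PD_u
  by simp

lemma Sup_inf_psum_eq: "x \<in> X \<Longrightarrow> Sup (inf x ` range psum) = Sup (inf x ` inftyB_plus_rep X B u)"
  using series_eq unfolding sc_equiv_def series_rep_def psum_def tpe_def pe_def by simp

lemma Sup_inf_psum_le: "x \<in> X \<Longrightarrow> Sup (inf x ` range psum) \<le> PB x + u"
  unfolding Sup_inf_psum_eq
proof (rule cSup_least)
  show "inf x ` inftyB_plus_rep X B u \<noteq> {}"
    using X_zero band_zero[OF B] u_nonneg unfolding inftyB_plus_rep_def by force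
  fix z assume "z \<in> inf x ` inftyB_plus_rep X B u"
  then obtain b y where b: "b \<in> B" and y: "0 \<le> y" "y \<le> u" and z: "z = inf x (b + y)"
    unfolding inftyB_plus_rep_def by auto
  have "y \<in> dcompl B" by (rule band_nonneg_le[OF dcompl_B u_in_dcompl y])
  then have "PD (b + y) = y"
    using bproj_add[OF dcompl_B] bproj_id[OF dcompl_B] bproj_eq_0[OF dcompl_B] b dcompl_dcompl_band[OF B]
    by simp
  then have "PD z \<le> u" unfolding z using bproj_mono[OF dcompl_B, of "inf x (b + y)" "b + y"] y(2) by simp
  moreover have "PB z \<le> PB x" unfolding z by (rule bproj_mono[OF B]) simp
  ultimately show "z \<le> PB x + u" using add_mono[of "PB z" "PB x" "PD z" u] PD_eq[of z] by simp
qed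

lemma scaleR_PB_e_le_Sup_inf_psum:
  assumes c: "0 \<le> c"
  shows "c *\<^sub>R PB e \<le> Sup (inf (c *\<^sub>R e) ` range psum)"
proof -
  have PBe: "0 \<le> PB e" "PB e \<le> e" "PB e \<in> X"
    using bproj_nonneg[OF B e_nonneg] bproj_le_self[OF B e_nonneg] X_bproj[OF B e_in_X] by auto
  have "c *\<^sub>R PB e + 0 \<in> inftyB_plus_rep X B u"
    unfolding inftyB_plus_rep_def
    using X_scaleR[OF PBe(3)] band_scaleR[OF B bproj_in[OF B]] scaleR_nonneg_nonneg[OF c PBe(1)] X_zero u_nonneg
    by blast
  moreover have "c *\<^sub>R PB e = inf (c *\<^sub>R e) (c *\<^sub>R PB e + 0)"
    using scaleR_left_mono[OF PBe(2) c] by (simp add: inf_absorb2)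
  ultimately have "c *\<^sub>R PB e \<le> Sup (inf (c *\<^sub>R e) ` inftyB_plus_rep X B u)"
    by (intro cSup_upper bdd_aboveI[of _ "c *\<^sub>R e"]) auto
  then show ?thesis using Sup_inf_psum_eq[OF X_scaleR[OF e_in_X]] by simp
qed

lemma PD_psum_le: "PD (psum N) \<le> u"
proof -
  have bdd: "bdd_above (inf (psum N) ` range psum)" by (rule bdd_aboveI[of _ "psum N"]) auto
  have "inf (psum N) (psum N) \<in> inf (psum N) ` range psum" by (rule imageI[OF rangeI])
  from cSup_upper[OF this bdd] have "psum N \<le> Sup (inf (psum N) ` range psum)" by simp
  also have "\<dots> \<le> PB (psum N) + u" by (rule Sup_inf_psum_le[OF psum_in_X])
  finally show ?thesis unfolding PD_eq by (simp add: algebra_simps)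
qed

definition capped_series :: "real \<Rightarrow> 'u" where
  "capped_series c = Sup (range (\<lambda>N. inf (c *\<^sub>R e) (psum N)))"

lemma capped_series:
  assumes c: "0 \<le> c"
  shows "capped_series c \<in> X" "c *\<^sub>R PB e \<le> capped_series c"
    "T (capped_series c) \<le> capped_series c" "PD (capped_series c) \<le> u"
proof -
  define y where "y N = inf (c *\<^sub>R e) (psum N)" for N
  have ce: "0 \<le> c *\<^sub>R e" "c *\<^sub>R e \<in> X" using scaleR_nonneg_nonneg[OF c e_nonneg] X_scaleR[OF e_in_X] by auto
  have range_y: "range y = inf (c *\<^sub>R e) ` range psum" unfolding y_def by auto
  have bdd: "bdd_above (range y)" unfolding y_def by (rule bdd_aboveI[of _ "c *\<^sub>R e"]) auto
  have y: "0 \<le> y N" "y N \<le> c *\<^sub>R e" for N unfolding y_def using ce psum_nonneg by auto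
  have y_in_X: "y N \<in> X" for N by (rule X_nonneg_le[OF ce(2) y])
  have Sup_eq: "capped_series c = Sup (range y)" unfolding capped_series_def y_def ..
  have "0 \<le> capped_series c" unfolding Sup_eq using bdd y(1)[of 0] by (intro order.trans[OF _ cSup_upper]) auto
  moreover have "capped_series c \<le> c *\<^sub>R e" unfolding Sup_eq using y(2) by (intro cSup_least) auto
  ultimately show in_X: "capped_series c \<in> X" by (rule X_nonneg_le[OF ce(2)])
  show "c *\<^sub>R PB e \<le> capped_series c"
    unfolding Sup_eq range_y by (rule scaleR_PB_e_le_Sup_inf_psum[OF c])
  \<comment> \<open>Each \<open>y N\<close> is fixed by \<open>T\<close>, and \<open>T\<close> is order continuous.\<close>
  have Ty: "T (y N) = y N" for N
    unfolding y_def by (rule range_T_fixed[OF range_T_inf[OF range_T_scaleR[OF range_T_e] psum_in_range_T]])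
  have "T (capped_series c) - capped_series c \<le> 0"
  proof (rule below_T_tails_nonpos[OF _ y_in_X bdd])
    show "mono y" unfolding y_def by (intro monoI inf_mono order_refl psum_mono)
    show "Sup (range y) \<in> X" using in_X unfolding Sup_eq .
    have "y N \<le> capped_series c" for N unfolding Sup_eq using bdd by (intro cSup_upper) auto
    then show "T (capped_series c) - capped_series c \<le> T (Sup (range y) - y N)" for N
      using T_diff[OF in_X y_in_X] Ty unfolding Sup_eq by simp
  qed
  then show "T (capped_series c) \<le> capped_series c" by simp
  have "capped_series c \<le> PB (c *\<^sub>R e) + u"
    unfolding Sup_eq range_y by (rule Sup_inf_psum_le[OF ce(2)])
  then show "PD (capped_series c) \<le> u" using bproj_mono[OF dcompl_B] PD_PB_add_u by metis
qed

text \<open>For every \<open>c \<ge> 0\<close>, \<open>c T (PB e)\<close> is dominated by the \<open>T\<close>-fixed element \<open>capped_series c\<close>,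
  whose \<open>dcompl B\<close>-part stays below \<open>u\<close>; so \<open>PD (T (PB e))\<close> is infinitesimal.\<close>

lemma T_PB_e: "T (PB e) = PB e"
proof -
  have PBe: "PB e \<in> X" "0 \<le> PB e" using X_bproj[OF B e_in_X] bproj_nonneg[OF B e_nonneg] by auto
  define k where "k = T (PB e)"
  have k: "k \<in> X" "0 \<le> k" unfolding k_def using T_in_X[OF PBe(1)] T_nonneg[OF PBe] by auto
  have "real n *\<^sub>R PD k \<le> u" for n
  proof -
    have c: "0 \<le> real n" by simp
    have "real n *\<^sub>R PD k = PD (T (real n *\<^sub>R PB e))"
      unfolding k_def using T_scaleR[OF PBe(1)] bproj_scaleR[OF dcompl_B] by simp
    also have "\<dots> \<le> PD (T (capped_series (real n)))"
      by (rule bproj_mono[OF dcompl_B T_mono[OF X_scaleR[OF PBe(1)] capped_series(1,2)[OF c]]])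
    also have "\<dots> \<le> PD (capped_series (real n))" by (rule bproj_mono[OF dcompl_B capped_series(3)[OF c]])
    also have "\<dots> \<le> u" by (rule capped_series(4)[OF c])
    finally show ?thesis .
  qed
  then have "PD k = 0" using archimedean_zero bproj_nonneg[OF dcompl_B k(2)] by blast
  then have "PB k = k" unfolding PD_eq by simp
  moreover have "k \<le> e" unfolding k_def by (rule T_le_e[OF PBe(1) bproj_le_self[OF B e_nonneg]])
  ultimately have k_le: "k \<le> PB e" using bproj_mono[OF B] by metis
  have "T (PB e - k) = 0" using T_diff[OF PBe(1) k(1)] T_idem[OF PBe(1)] unfolding k_def by simp
  then have "PB e - k = 0" using T_eq_0_imp_eq_0[OF X_diff[OF PBe(1) k(1)]] k_le by simp
  then show ?thesis unfolding k_def by simp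
qed

lemma PB_T_commute: "x \<in> X \<Longrightarrow> PB (T x) = T (PB x)"
  by (rule bproj_T_commute[OF B T_PB_e])

lemma T_PD_in_dcompl: "x \<in> X \<Longrightarrow> 0 \<le> x \<Longrightarrow> T (PD x) \<in> dcompl B"
proof (rule T_bproj_in_band[OF dcompl_B])
  have "T (PD e) = PD e" unfolding PD_eq using T_diff[OF e_in_X X_bproj[OF B e_in_X]] T_e T_PB_e by simp
  then show "T (PD e) \<in> dcompl B" using bproj_in[OF dcompl_B] by simp
qed

lemma scaleR_le_of_mult_psum_le:
  assumes g: "g \<in> B" "0 \<le> g" "g \<le> e" and bound: "\<And>N. mult g (psum N) \<le> b"
  shows "real c *\<^sub>R g \<le> b"
proof -
  define a where "a = real c *\<^sub>R PB e"
  define y where "y N = inf a (psum N)" for N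
  have ga: "mult g a = real c *\<^sub>R g"
    unfolding a_def mult_scaleR_right mult_bproj_unit[OF B e_nonneg g(1,2)] ..
  \<comment> \<open>Split \<open>a = y N + (a - y N)\<close>: \<open>g\<close> acts boundedly on the first part and contractively on the second.\<close>
  have "y N \<le> a - (real c *\<^sub>R g - b)" for N
  proof -
    have "mult g (y N) \<le> b"
      using order.trans[OF mult_mono_right[OF g(2), of "y N" "psum N"] bound] by (simp add: y_def)
    moreover have "0 \<le> a - y N" unfolding y_def by (simp only: diff_ge_0_iff_ge inf.cobounded1)
    then have "mult g (a - y N) \<le> a - y N" by (rule mult_le_unit[OF g(3)])
    ultimately have "mult g (y N) + mult g (a - y N) \<le> b + (a - y N)" by (rule add_mono)
    then show ?thesis using ga mult_add_right[of g "y N" "a - y N"] by (simp add: algebra_simps)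
  qed
  then have "Sup (range y) \<le> a - (real c *\<^sub>R g - b)" by (intro cSup_least) auto
  moreover have "Sup (range y) = a"
  proof -
    have a_le: "a \<le> real c *\<^sub>R e" unfolding a_def by (rule scaleR_left_mono[OF bproj_le_self[OF B e_nonneg]]) simp
    have "range y = inf a ` inf (real c *\<^sub>R e) ` range psum"
      unfolding y_def image_image using a_le by (auto simp: inf_assoc[symmetric] inf_absorb1)
    moreover have "bdd_above (inf (real c *\<^sub>R e) ` range psum)" by (rule bdd_aboveI[of _ "real c *\<^sub>R e"]) auto
    then have "inf a (Sup (inf (real c *\<^sub>R e) ` range psum)) = Sup (inf a ` inf (real c *\<^sub>R e) ` range psum)"
      by (intro inf_Sup_distrib) auto
    ultimately have "Sup (range y) = inf a (Sup (inf (real c *\<^sub>R e) ` range psum))" by simp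
    also have "\<dots> = a" using scaleR_PB_e_le_Sup_inf_psum[of "real c"] unfolding a_def by (simp add: inf_absorb1)
    finally show ?thesis .
  qed
  ultimately show ?thesis by simp
qed

lemma B_subset_tail_band: "B \<subseteq> tail_band n"
proof -
  define K where "K = B \<inter> dcompl (tail_band n)"
  have K: "is_band K" unfolding K_def by (rule band_Int[OF B dcompl_is_band])
  define w where "w = bproj K e"
  have w: "0 \<le> w" "w \<le> e" "w \<in> K"
    unfolding w_def using bproj_nonneg[OF K e_nonneg] bproj_le_self[OF K e_nonneg] bproj_in[OF K] by auto
  have wX: "w \<in> X" by (rule X_nonneg_le_e[OF w(1,2)])
  have w_dcompl: "w \<in> dcompl (Pband k)" if "n \<le> k" for k
    using w(3) dcompl_antimono[OF Pband_subset_tail_band[OF that]] unfolding K_def by auto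
  \<comment> \<open>\<open>T w\<close> lies in \<open>B\<close>, where the partial sums are unbounded, yet it acts boundedly on them.\<close>
  have "T w \<in> B" using PB_T_commute[OF wX] bproj_id[OF B] bproj_in[OF B] w(3) unfolding K_def by (metis IntE)
  then have "real c *\<^sub>R T w \<le> psum n + e" for c
    using T_nonneg[OF wX w(1)] T_le_e[OF wX w(2)] mult_T_psum_le[OF w(1,2) w_dcompl]
    by (intro scaleR_le_of_mult_psum_le) auto
  then have "T w = 0" using archimedean_zero T_nonneg[OF wX w(1)] by blast
  then have "w = 0" using T_eq_0_imp_eq_0[OF wX w(1)] by simp
  then have K_zero: "x = 0" if "x \<in> K" for x using band_trivial_if_bproj_e_eq_0[OF K _ that] unfolding w_def by simp
  show ?thesis
  proof
    fix x assume x: "x \<in> B"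
    have "bproj (dcompl (tail_band n)) x = bproj (dcompl (tail_band n)) (PB x)" using bproj_id[OF B x] by simp
    also have "\<dots> = 0"
      using bproj_bproj[OF dcompl_is_band B] K_zero bproj_in[OF K] unfolding K_def by (simp add: Int_commute)
    finally have "bproj (tail_band n) x = x" using bproj_dcompl[OF tail_band] by simp
    then show "x \<in> tail_band n" using bproj_id_iff[OF tail_band] by blast
  qed
qed

definition PD_series :: 'u where
  "PD_series = Sup (range (\<lambda>N. PD (psum N)))"

lemma PD_psum_le_PD_series: "PD (psum N) \<le> PD_series"
  unfolding PD_series_def by (intro cSup_upper bdd_aboveI[of _ u]) (auto intro: PD_psum_le)

text \<open>The part of the tail band of \<open>e\<close> in \<open>dcompl B\<close> is controlled by the remaining
  \<open>dcompl B\<close> part of the series, as \<open>tail_sup n m \<le> pe n + \<dots> + pe (m - 1)\<close>.\<close>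

lemma PD_T_tail_band_e_le: "PD (T (bproj (tail_band n) e)) \<le> PD_series - PD (psum n)"
proof -
  define \<rho> where "\<rho> = bproj (tail_band n) e"
  have \<rho>: "\<rho> = Sup (range (tail_sup n))" unfolding \<rho>_def by (rule bproj_tail_band_e)
  have bdd: "bdd_above (range (tail_sup n))" by (rule bdd_aboveI[of _ e]) (auto intro: tail_sup_le_e)
  have \<rho>X: "\<rho> \<in> X" unfolding \<rho>_def by (rule X_bproj[OF tail_band e_in_X])
  have bound: "PD (T \<rho>) - (PD_series - PD (psum n)) \<le> T (\<rho> - tail_sup n m)" for m
  proof -
    have d: "\<rho> - tail_sup n m \<in> X" "0 \<le> \<rho> - tail_sup n m"
      using X_diff[OF \<rho>X tail_sup_in_X] cSup_upper[OF _ bdd, of "tail_sup n m"] unfolding \<rho> by auto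
    have sum_X: "sum pe {n..<m} \<in> X" by (rule X_sum) (rule pe_in_X)
    have "PD (T (tail_sup n m)) \<le> PD (T (sum pe {n..<m}))"
      by (rule bproj_mono[OF dcompl_B T_mono[OF tail_sup_in_X sum_X tail_sup_le_sum]])
    also have "T (sum pe {n..<m}) = psum (max n m) - psum n"
    proof (cases "n \<le> m")
      case True
      then show ?thesis using T_sum[OF pe_in_X] psum_split[of n m] unfolding tpe_def by simp
    qed (simp add: T_zero)
    also have "PD (psum (max n m) - psum n) \<le> PD_series - PD (psum n)"
      using bproj_diff[OF dcompl_B] PD_psum_le_PD_series[of "max n m"] by simp
    finally have head: "PD (T (tail_sup n m)) \<le> PD_series - PD (psum n)" .
    have "T \<rho> = T (tail_sup n m) + T (\<rho> - tail_sup n m)" using T_add[OF tail_sup_in_X[of n m] d(1)] by simp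
    then have "PD (T \<rho>) = PD (T (tail_sup n m)) + PD (T (\<rho> - tail_sup n m))" using bproj_add[OF dcompl_B] by simp
    moreover have "PD (T (\<rho> - tail_sup n m)) \<le> T (\<rho> - tail_sup n m)"
      by (rule bproj_le_self[OF dcompl_B T_nonneg[OF d]])
    ultimately have "PD (T \<rho>) \<le> (PD_series - PD (psum n)) + T (\<rho> - tail_sup n m)"
      using add_mono[OF head] by simp
    then show ?thesis by (simp add: algebra_simps)
  qed
  have "PD (T \<rho>) - (PD_series - PD (psum n)) \<le> 0"
    using below_T_tails_nonpos[OF tail_sup_mono tail_sup_in_X bdd] \<rho>X bound unfolding \<rho> by blast
  then show ?thesis unfolding \<rho>_def by simp
qed

lemma band_below_tails_subset_B:
  assumes E: "is_band E" and E_tails: "\<And>n. E \<subseteq> tail_band n"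
  shows "E \<subseteq> B"
proof -
  define K where "K = E \<inter> dcompl B"
  have K: "is_band K" unfolding K_def by (rule band_Int[OF E dcompl_B])
  define v where "v = bproj K e"
  have v: "0 \<le> v" "v \<le> e" "v \<in> K"
    unfolding v_def using bproj_nonneg[OF K e_nonneg] bproj_le_self[OF K e_nonneg] bproj_in[OF K] by auto
  have vX: "v \<in> X" by (rule X_nonneg_le_e[OF v(1,2)])
  have g: "T v \<in> dcompl B" "0 \<le> T v"
    using T_PD_in_dcompl[OF vX v(1)] bproj_id[OF dcompl_B] v(3) T_nonneg[OF vX v(1)] unfolding K_def by auto
  \<comment> \<open>\<open>T v\<close> lies below the \<open>dcompl B\<close>-part of \<open>T\<close> of every tail band of \<open>e\<close>.\<close>
  have "PD (psum n) \<le> PD_series - T v" for n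
  proof -
    have "v \<in> tail_band n" using v(3) E_tails unfolding K_def by auto
    then have "v = bproj (tail_band n) v" using bproj_id[OF tail_band] by simp
    also have "\<dots> \<le> bproj (tail_band n) e" by (rule bproj_mono[OF tail_band v(2)])
    finally have "v \<le> bproj (tail_band n) e" .
    then have "T v \<le> PD (T (bproj (tail_band n) e))"
      using bproj_mono[OF dcompl_B T_mono[OF vX X_bproj[OF tail_band e_in_X]]] bproj_id[OF dcompl_B g(1)]
      by metis
    then show ?thesis using order.trans[OF _ PD_T_tail_band_e_le[of n]] by (simp add: algebra_simps)
  qed
  then have "PD_series \<le> PD_series - T v" unfolding PD_series_def by (intro cSup_least) auto
  then have "v = 0" using g(2) T_eq_0_imp_eq_0[OF vX v(1)] by simp
  then have K_zero: "x = 0" if "x \<in> K" for x using band_trivial_if_bproj_e_eq_0[OF K _ that] unfolding v_def by simp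
  show ?thesis
  proof
    fix x assume x: "x \<in> E"
    have "PD x = PD (bproj E x)" using bproj_id[OF E x] by simp
    also have "\<dots> = 0"
      using bproj_bproj[OF dcompl_B E] K_zero bproj_in[OF K] unfolding K_def by (simp add: Int_commute)
    finally show "x \<in> B" using PD_eq bproj_in[OF B, of x] by simp
  qed
qed

theorem bp_limsup_eq_PB: "bp_limsup P = PB"
  unfolding bp_limsup_def bp_Sup_tail
proof (rule bp_Inf_bproj[OF B])
  fix Q assume "Q \<in> range (\<lambda>n. bproj (tail_band n))"
  then obtain n where Q: "Q = bproj (tail_band n)" by auto
  show "bp_le PB Q" unfolding Q using bp_le_bproj_iff[OF B tail_band] B_subset_tail_band by simp
next
  fix E :: "'u set" assume E: "is_band E" and "\<forall>Q\<in>range (\<lambda>n. bproj (tail_band n)). bp_le (bproj E) Q"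
  then have "E \<subseteq> tail_band n" for n using bp_le_bproj_iff[OF E tail_band] by auto
  then show "E \<subseteq> B" by (rule band_below_tails_subset_B[OF E])
qed

end

theorem mainTheorem3:
  fixes X :: "'u::dc_riesz_space set"
    and T :: "'u \<Rightarrow> 'u"
    and e :: 'u
    and mult :: "'u \<Rightarrow> 'u \<Rightarrow> 'u"
    and P :: "nat \<Rightarrow> 'u \<Rightarrow> 'u"
  assumes uc: "is_universal_completion_of X"
    and unit: "weak_order_unit X e"
    and falg: "f_algebra_unit mult e"
    and ce: "cond_exp X T e"
    and Tuc: "T_univ_complete X T"
    and bp: "\<And>n. band_proj (P n)"
    and ind: "T_indep T mult e P"
  shows "(\<forall>B u. is_band B \<and> u \<in> dcompl B \<and> 0 \<le> u
            \<and> sc_equiv X (series_rep (\<lambda>n. T (P n e))) (inftyB_plus_rep X B u) \<longrightarrow>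
            (\<forall>x\<in>X. bproj B (T x) = T (bproj B x)) \<and> bproj B = bp_limsup P)
       \<and> (sc_equiv X (series_rep (\<lambda>n. T (P n e))) (infty_rep X) \<longrightarrow> bp_limsup P = id)"
proof -
  interpret indep_sequence X T e mult P
    using uc unit falg ce bp ind by unfold_locales
  have band_case: "(\<forall>x\<in>X. bproj B (T x) = T (bproj B x)) \<and> bproj B = bp_limsup P"
    if "is_band B" "u \<in> dcompl B" "0 \<le> u"
      "sc_equiv X (series_rep (\<lambda>n. T (P n e))) (inftyB_plus_rep X B u)" for B u
  proof -
    interpret series_band X T e mult P B u by unfold_locales (use that in auto)
    show ?thesis using PB_T_commute bp_limsup_eq_PB by simp
  qed
  have "bp_limsup P = id" if "sc_equiv X (series_rep (\<lambda>n. T (P n e))) (infty_rep X)"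
  proof -
    have "inftyB_plus_rep X UNIV 0 = infty_rep X"
      unfolding inftyB_plus_rep_def infty_rep_def using X_zero by force
    moreover have "(0::'u) \<in> dcompl UNIV" unfolding dcompl_def using disj_zero by blast
    ultimately have "bproj UNIV = bp_limsup P" using band_case[OF band_UNIV _ order_refl] that by simp
    with bproj_UNIV show ?thesis by metis
  qed
  with band_case show ?thesis by blast
qed

end
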